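(* Let the disorder distribution $\mathbb P$ be a translation-invariant product measure, let the finite-range defining potential $\Phi$ be translation-invariant, and let $K^{\bar\sigma}$ be a translation-invariant joint measure constructed with spin boundary condition $\bar\sigma$. Let $\sigma^0$ be a translation-invariant spin configuration and $\lambda=\mathbb P\otimes\delta_{\sigma^0}$ (the law of $(\sigma^0,\eta)$ with $\eta\sim\mathbb P$). Then $e^\lambda_{K^{\bar\sigma}}$ exists and $$e^\lambda_{K^{\bar\sigma}}=h(\mathbb P)+\sum_{A\ni0}\int\mathbb P(d\eta)\frac{\Phi_A(\sigma^0,\eta)}{|A|}+\int\mathbb P(d\eta)\lim_{n\to\infty}\frac1{|\Lambda_n|}\log Z^{\bar\sigma}_{\Lambda_n}[\eta].$$
   Context: Let $E,E'$ be finite sets; spins $\sigma\in E^{\mathbb Z^d}$, disorder $\eta\in(E')^{\mathbb Z^d}$, joint configurations $\xi=(\sigma,\eta)$. A defining potential $\Phi=(\Phi_A)_{A\text{ finite}}$ consists of real functions with $\Phi_A(\sigma,\eta)$ depending only on $(\sigma_A,\eta_A)$, finite range ($\Phi_A=0$ if $\operatorname{diam}A>r$), translation-invariant ($\Phi_{A+x}(\xi)=\Phi_A(\tau_x\xi)$, $(\tau_x\xi)(y)=\xi(x+y)$). Quenched finite-volume Gibbs measures: $\mu^{\bar\sigma}_\Lambda[\eta](B)=Z^{\bar\sigma}_\Lambda[\eta]^{-1}\sum_{\sigma_\Lambda}1_B(\sigma_\Lambda\bar\sigma_{\Lambda^c})\exp(-\sum_{A\cap\Lambda\neq\emptyset}\Phi_A(\sigma_\Lambda\bar\sigma_{\Lambda^c},\eta))$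 with partition function $Z^{\bar\sigma}_\Lambda[\eta]$. A joint measure $K^{\bar\sigma}$ is a weak limit of $\mathbb P(d\eta)\mu^{\bar\sigma}_{\Lambda_N}[\eta](d\sigma)$ along some $\Lambda_N\uparrow\mathbb Z^d$. $\Lambda_n=[-n,n]^d\cap\mathbb Z^d$. For a probability measure $\nu$ and $\lambda$ on the joint space, $e^\lambda_\nu=-\lim_n|\Lambda_n|^{-1}\int\log\nu(\xi_{\Lambda_n})\,\lambda(d\xi)$ when the limit exists, where $\nu(\xi_\Lambda)=\nu(\{\xi':\xi'_\Lambda=\xi_\Lambda\})$. $h(\mathbb P)=-\lim_n|\Lambda_n|^{-1}\sum_{\eta_{\Lambda_n}}\mathbb P(\eta_{\Lambda_n})\log\mathbb P(\eta_{\Lambda_n})$ is the Kolmogorov–Sinai entropy. *)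

theory Defs
  imports "HOL-Probability.Probability"
begin

text \<open>Sites are points of the lattice Z^d, modelled as int ^ 'd with 'd a finite index type
  (d = CARD('d)). Spins take values in a finite type 'e (= E), disorder in a finite type 'f (= E').\<close>

type_synonym 'd site = "int ^ 'd"

definition conf_space :: "('d::finite site \<Rightarrow> 'a) measure" where
  "conf_space = PiM UNIV (\<lambda>_. count_space UNIV)"

definition joint_space :: "(('d::finite site \<Rightarrow> 'e) \<times> ('d site \<Rightarrow> 'f)) measure" where
  "joint_space = conf_space \<Otimes>\<^sub>M conf_space"

definition box :: "nat \<Rightarrow> 'd::finite site set" where
  "box n = {x. \<forall>i. \<bar>x $ i\<bar> \<le> int n}"

definition is_defining_potential ::
  "('d::finite site set \<Rightarrow> ('d site \<Rightarrow> 'e) \<Rightarrow> ('d site \<Rightarrow> 'f) \<Rightarrow> real) \<Rightarrow> bool" where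
  "is_defining_potential \<Phi> \<longleftrightarrow>
     (\<forall>A \<sigma> \<sigma>' \<eta> \<eta>'. (\<forall>x\<in>A. \<sigma> x = \<sigma>' x \<and> \<eta> x = \<eta>' x) \<longrightarrow> \<Phi> A \<sigma> \<eta> = \<Phi> A \<sigma>' \<eta>') \<and>
     (\<exists>r::int. \<forall>A. finite A \<longrightarrow> (\<exists>x\<in>A. \<exists>y\<in>A. \<exists>i. \<bar>x $ i - y $ i\<bar> > r) \<longrightarrow>
                      (\<forall>\<sigma> \<eta>. \<Phi> A \<sigma> \<eta> = 0)) \<and>
     (\<forall>x A \<sigma> \<eta>. \<Phi> ((\<lambda>y. x + y) ` A) \<sigma> \<eta> = \<Phi> A (\<lambda>y. \<sigma> (x + y)) (\<lambda>y. \<eta> (x + y)))"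

definition hamiltonian ::
  "('d::finite site set \<Rightarrow> ('d site \<Rightarrow> 'e) \<Rightarrow> ('d site \<Rightarrow> 'f) \<Rightarrow> real) \<Rightarrow> 'd site set \<Rightarrow>
    ('d site \<Rightarrow> 'e) \<Rightarrow> ('d site \<Rightarrow> 'f) \<Rightarrow> real" where
  "hamiltonian \<Phi> \<Lambda> \<sigma> \<eta> = infsum (\<lambda>A. \<Phi> A \<sigma> \<eta>) {A. finite A \<and> A \<inter> \<Lambda> \<noteq> {}}"

definition bc_configs :: "('d::finite site \<Rightarrow> 'e) \<Rightarrow> 'd site set \<Rightarrow> ('d site \<Rightarrow> 'e) set" where
  "bc_configs \<sigma>b \<Lambda> = {\<sigma>. \<forall>x. x \<notin> \<Lambda> \<longrightarrow> \<sigma> x = \<sigma>b x}"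

definition partition_fn ::
  "('d::finite site set \<Rightarrow> ('d site \<Rightarrow> 'e) \<Rightarrow> ('d site \<Rightarrow> 'f) \<Rightarrow> real) \<Rightarrow> ('d site \<Rightarrow> 'e) \<Rightarrow>
    'd site set \<Rightarrow> ('d site \<Rightarrow> 'f) \<Rightarrow> real" where
  "partition_fn \<Phi> \<sigma>b \<Lambda> \<eta> = (\<Sum>\<sigma>\<in>bc_configs \<sigma>b \<Lambda>. exp (- hamiltonian \<Phi> \<Lambda> \<sigma> \<eta>))"

definition gibbs_pmf ::
  "('d::finite site set \<Rightarrow> ('d site \<Rightarrow> 'e) \<Rightarrow> ('d site \<Rightarrow> 'f) \<Rightarrow> real) \<Rightarrow> ('d site \<Rightarrow> 'e) \<Rightarrow>
    'd site set \<Rightarrow> ('d site \<Rightarrow> 'f) \<Rightarrow> ('d site \<Rightarrow> 'e) pmf" where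
  "gibbs_pmf \<Phi> \<sigma>b \<Lambda> \<eta> = embed_pmf (\<lambda>\<sigma>. if \<sigma> \<in> bc_configs \<sigma>b \<Lambda>
        then exp (- hamiltonian \<Phi> \<Lambda> \<sigma> \<eta>) / partition_fn \<Phi> \<sigma>b \<Lambda> \<eta> else 0)"

definition fv_joint ::
  "('d::finite site \<Rightarrow> 'f) measure \<Rightarrow>
   ('d site set \<Rightarrow> ('d site \<Rightarrow> 'e) \<Rightarrow> ('d site \<Rightarrow> 'f) \<Rightarrow> real) \<Rightarrow> ('d site \<Rightarrow> 'e) \<Rightarrow>
    'd site set \<Rightarrow> (('d site \<Rightarrow> 'e) \<times> ('d site \<Rightarrow> 'f)) measure" where
  "fv_joint P \<Phi> \<sigma>b \<Lambda> = P \<bind> (\<lambda>\<eta>. distr (measure_pmf (gibbs_pmf \<Phi> \<sigma>b \<Lambda> \<eta>)) joint_space (\<lambda>\<sigma>. (\<sigma>, \<eta>)))"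

definition joint_agree :: "'a set \<Rightarrow> ('a \<Rightarrow> 'e) \<times> ('a \<Rightarrow> 'f) \<Rightarrow> ('a \<Rightarrow> 'e) \<times> ('a \<Rightarrow> 'f) \<Rightarrow> bool" where
  "joint_agree W \<xi> \<xi>' \<longleftrightarrow> (\<forall>x\<in>W. fst \<xi>' x = fst \<xi> x \<and> snd \<xi>' x = snd \<xi> x)"

text \<open>Continuity for the product of discrete topologies on (E x E')^{Z^d}.\<close>
definition joint_continuous :: "(('a \<Rightarrow> 'e) \<times> ('a \<Rightarrow> 'f) \<Rightarrow> real) \<Rightarrow> bool" where
  "joint_continuous g \<longleftrightarrow> (\<forall>\<xi> \<epsilon>. \<epsilon> > 0 \<longrightarrow>
      (\<exists>W. finite W \<and> (\<forall>\<xi>'. joint_agree W \<xi> \<xi>' \<longrightarrow> \<bar>g \<xi>' - g \<xi>\<bar> < \<epsilon>)))"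

text \<open>Weak convergence: integrals of all continuous (hence bounded, the space being compact) real
  functions converge.\<close>
definition weak_conv :: "(nat \<Rightarrow> (('a \<Rightarrow> 'e) \<times> ('a \<Rightarrow> 'f)) measure) \<Rightarrow>
    (('a \<Rightarrow> 'e) \<times> ('a \<Rightarrow> 'f)) measure \<Rightarrow> bool" where
  "weak_conv M K \<longleftrightarrow> (\<forall>g. joint_continuous g \<longrightarrow>
      (\<lambda>N. \<integral>\<xi>. g \<xi> \<partial>M N) \<longlonglongrightarrow> (\<integral>\<xi>. g \<xi> \<partial>K))"

definition is_joint_measure ::
  "('d::finite site \<Rightarrow> 'f) measure \<Rightarrow>
   ('d site set \<Rightarrow> ('d site \<Rightarrow> 'e) \<Rightarrow> ('d site \<Rightarrow> 'f) \<Rightarrow> real) \<Rightarrow> ('d site \<Rightarrow> 'e) \<Rightarrow>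
   (('d site \<Rightarrow> 'e) \<times> ('d site \<Rightarrow> 'f)) measure \<Rightarrow> bool" where
  "is_joint_measure P \<Phi> \<sigma>b K \<longleftrightarrow> sets K = sets joint_space \<and> prob_space K \<and>
     (\<exists>\<Lambda>::nat \<Rightarrow> 'd site set. (\<forall>N. finite (\<Lambda> N)) \<and> incseq \<Lambda> \<and> (\<Union>N. \<Lambda> N) = UNIV \<and>
        weak_conv (\<lambda>N. fv_joint P \<Phi> \<sigma>b (\<Lambda> N)) K)"

definition shift :: "'d::finite site \<Rightarrow> ('d site \<Rightarrow> 'e) \<times> ('d site \<Rightarrow> 'f) \<Rightarrow> ('d site \<Rightarrow> 'e) \<times> ('d site \<Rightarrow> 'f)" where
  "shift x \<xi> = ((\<lambda>y. fst \<xi> (x + y)), (\<lambda>y. snd \<xi> (x + y)))"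

definition trans_inv_joint :: "(('d::finite site \<Rightarrow> 'e) \<times> ('d site \<Rightarrow> 'f)) measure \<Rightarrow> bool" where
  "trans_inv_joint K \<longleftrightarrow> (\<forall>x. distr K joint_space (shift x) = K)"

definition cyl_prob :: "(('a \<Rightarrow> 'e) \<times> ('a \<Rightarrow> 'f)) measure \<Rightarrow> 'a set \<Rightarrow> ('a \<Rightarrow> 'e) \<times> ('a \<Rightarrow> 'f) \<Rightarrow> real" where
  "cyl_prob \<nu> \<Lambda> \<xi> = measure \<nu> {\<xi>' \<in> space \<nu>. joint_agree \<Lambda> \<xi> \<xi>'}"

definition e_seq :: "(('d::finite site \<Rightarrow> 'e) \<times> ('d site \<Rightarrow> 'f)) measure \<Rightarrow>
    (('d site \<Rightarrow> 'e) \<times> ('d site \<Rightarrow> 'f)) measure \<Rightarrow> nat \<Rightarrow> real" where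
  "e_seq \<nu> lam n = - (\<integral>\<xi>. ln (cyl_prob \<nu> (box n) \<xi>) \<partial>lam) / real (card (box n :: 'd site set))"

definition ks_entropy :: "('d::finite site \<Rightarrow> 'f) measure \<Rightarrow> real" where
  "ks_entropy P = - lim (\<lambda>n. (\<Sum>\<zeta>\<in>PiE (box n) (\<lambda>_. UNIV).
       measure P {\<eta> \<in> space P. \<forall>x\<in>box n. \<eta> x = \<zeta> x} *
       ln (measure P {\<eta> \<in> space P. \<forall>x\<in>box n. \<eta> x = \<zeta> x})) / real (card (box n :: 'd site set)))"

end

theory Submission
  imports Defs
begin

text \<open>For a
  finite-range potential, changing the boundary condition or the disorder outside a finite volume
  \<open>B\<close>, or cutting a volume along \<open>B\<close>, changes Boltzmann weights and partition functions only by
  a factor \<open>exp (O |\<partial>B|)\<close>. Hence the \<open>K\<close>-probability of a cylinder \<open>(\<sigma>, \<eta>)\<close> on \<open>B\<close> is, up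
  to such a factor, \<open>P(\<eta> on B) exp (- H\<^sub>B(\<sigma>, \<eta>)) / Z\<^sub>B(\<eta>)\<close>; this survives the weak limit
  defining \<open>K\<close> because cylinder indicators are continuous. Taking logarithms, integrating over
  \<open>\<eta>\<close> and dividing by \<open>|\<Lambda>\<^sub>n|\<close> splits \<open>e\<^sup>\<lambda>\<close> into the entropy of \<open>P\<close>, the mean energy
  density (the mean energy of each bond shared equally among its sites) and the mean of the
  quenched pressure \<open>ln Z\<^sub>\<Lambda>\<^sub>n / |\<Lambda>\<^sub>n|\<close>, up to errors of order \<open>|\<partial>\<Lambda>\<^sub>n| / |\<Lambda>\<^sub>n| \<rightarrow> 0\<close>.

  The quenched pressure converges almost surely: tiling \<open>\<Lambda>\<^sub>n\<close> by translates of a fixed cube,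
  the tile partition functions (with the disorder restricted to the tile) are independent and
  bounded, so Hoeffding's inequality and Borel--Cantelli control their average. Dominated
  convergence then gives the limit of the means.\<close>

section \<open>Multiplicative closeness\<close>

definition mult_close :: "real \<Rightarrow> real \<Rightarrow> real \<Rightarrow> bool" where
  "mult_close c x y \<longleftrightarrow> x \<le> exp c * y \<and> y \<le> exp c * x"

lemma mult_close_sym: "mult_close c x y \<Longrightarrow> mult_close c y x"
  by (simp add: mult_close_def)

lemma mult_close_nonneg: "mult_close c x y \<Longrightarrow> 0 \<le> x \<Longrightarrow> 0 \<le> y"
  unfolding mult_close_def by (meson exp_gt_zero order_trans zero_le_mult_iff not_le)

lemma mult_close_pos: "mult_close c x y \<Longrightarrow> 0 < x \<Longrightarrow> 0 < y"
  unfolding mult_close_def by (metis exp_gt_zero less_le_trans zero_less_mult_iff not_less_iff_gr_or_eq)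

lemma mult_close_trans:
  assumes "mult_close c x y" "mult_close c' y z"
  shows "mult_close (c + c') x z"
proof -
  have "x \<le> exp c * (exp c' * z)" "z \<le> exp c' * (exp c * x)"
    using assms by (auto simp: mult_close_def intro: order_trans mult_left_mono)
  then show ?thesis by (simp add: mult_close_def exp_add ac_simps)
qed

lemma mult_close_mult:
  assumes "mult_close c x y" "mult_close c' u v" "0 \<le> x" "0 \<le> u"
  shows "mult_close (c + c') (x * u) (y * v)"
proof -
  have "0 \<le> y" "0 \<le> v" using assms mult_close_nonneg by blast+
  then have "x * u \<le> (exp c * y) * (exp c' * v)" "y * v \<le> (exp c * x) * (exp c' * u)"
    using assms by (auto simp: mult_close_def intro!: mult_mono)
  then show ?thesis by (simp add: mult_close_def exp_add ac_simps)
qed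

lemma mult_close_sum:
  assumes "\<And>i. i \<in> I \<Longrightarrow> mult_close c (f i) (g i)"
  shows "mult_close c (\<Sum>i\<in>I. f i) (\<Sum>i\<in>I. g i)"
  using assms unfolding mult_close_def sum_distrib_left by (auto intro: sum_mono)

lemma mult_close_divide:
  assumes "mult_close c x y" "mult_close c' u v" "0 \<le> x" "0 < u"
  shows "mult_close (c + c') (x / u) (y / v)"
proof -
  have "mult_close c' (inverse u) (inverse v)"
    using assms(2,4) mult_close_pos[OF assms(2,4)]
    by (auto simp: mult_close_def field_simps)
  from mult_close_mult[OF assms(1) this assms(3)] assms(4) show ?thesis
    by (simp add: divide_inverse)
qed

lemma mult_close_exp: "\<bar>a - b\<bar> \<le> c \<Longrightarrow> mult_close c (exp a) (exp b)"
  by (simp add: mult_close_def exp_add[symmetric] abs_le_iff)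

lemma abs_ln_diff_le_if_mult_close:
  assumes "mult_close c x y" "0 < x"
  shows "\<bar>ln x - ln y\<bar> \<le> c"
proof -
  have y: "0 < y" using mult_close_pos[OF assms] .
  have "ln x \<le> ln (exp c * y)" "ln y \<le> ln (exp c * x)"
    using assms y by (auto simp: mult_close_def)
  then show ?thesis using assms y by (simp add: ln_mult abs_le_iff)
qed

lemma mult_close_LIMSEQ:
  assumes "X \<longlonglongrightarrow> x" "eventually (\<lambda>n. mult_close c (X n) y) sequentially"
  shows "mult_close c x y"
proof -
  have "x \<le> exp c * y"
    using assms by (intro LIMSEQ_le_const2[OF assms(1)]) (auto simp: mult_close_def eventually_sequentially)
  moreover have "y \<le> exp c * x"
  proof -
    have "(\<lambda>n. exp c * X n) \<longlonglongrightarrow> exp c * x" by (intro tendsto_intros assms(1))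
    then show ?thesis
      by (rule LIMSEQ_le_const) (use assms(2) in \<open>auto simp: mult_close_def eventually_sequentially\<close>)
  qed
  ultimately show ?thesis by (simp add: mult_close_def)
qed

section \<open>Boxes, cubes and tilings\<close>

lemma box_eq_image: "box n = vec_lambda ` (Pi\<^sub>E UNIV (\<lambda>_. {-int n..int n}))"
proof -
  have "x \<in> vec_lambda ` (Pi\<^sub>E UNIV (\<lambda>_. {-int n..int n}))" if "x \<in> box n" for x
  proof
    show "x = vec_lambda (vec_nth x)" by simp
    show "vec_nth x \<in> Pi\<^sub>E UNIV (\<lambda>_. {-int n..int n})"
      using that by (auto simp: box_def abs_le_iff) (metis minus_le_iff)
  qed
  moreover have "x \<in> box n" if "x \<in> vec_lambda ` (Pi\<^sub>E UNIV (\<lambda>_. {-int n..int n}))" for x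
    using that by (auto simp: box_def abs_le_iff PiE_iff) (metis minus_le_iff)
  ultimately show ?thesis by blast
qed

lemma finite_box [simp]: "finite (box n :: 'd::finite site set)"
  unfolding box_eq_image by (intro finite_imageI finite_PiE) auto

lemma card_box: "card (box n :: 'd::finite site set) = (2 * n + 1) ^ CARD('d)"
proof -
  have "card (box n :: 'd site set) = card (Pi\<^sub>E (UNIV::'d set) (\<lambda>_. {-int n..int n}))"
    unfolding box_eq_image by (rule card_image) (auto intro!: inj_onI simp: vec_lambda_inject)
  also have "\<dots> = (2 * n + 1) ^ CARD('d)" by (simp add: card_PiE nat_add_distrib nat_mult_distrib)
  finally show ?thesis .
qed

lemma card_box_pos: "card (box n :: 'd::finite site set) > 0"
  by (simp add: card_box)

lemma zero_in_box [simp]: "0 \<in> box n"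
  by (simp add: box_def)

lemma box_mono: "m \<le> n \<Longrightarrow> box m \<subseteq> box n"
  by (auto simp: box_def) (meson of_nat_le_iff order_trans)

definition cube :: "nat \<Rightarrow> 'd::finite site \<Rightarrow> 'd site set" where
  "cube r x = (\<lambda>y. x + y) ` box r"

lemma mem_cube: "y \<in> cube r x \<longleftrightarrow> (\<forall>i. \<bar>y $ i - x $ i\<bar> \<le> int r)"
proof
  assume "\<forall>i. \<bar>y $ i - x $ i\<bar> \<le> int r"
  then have "y - x \<in> box r" by (simp add: box_def)
  then show "y \<in> cube r x" unfolding cube_def by (intro image_eqI[of _ _ "y - x"]) auto
qed (auto simp: cube_def box_def)

lemma finite_cube [simp]: "finite (cube r x)"
  by (simp add: cube_def)

lemma card_cube: "card (cube r (x::'d::finite site)) = card (box r :: 'd site set)"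
  unfolding cube_def by (rule card_image) (auto simp: inj_on_def)

lemma card_box_shell_ratio_tendsto_0:
  "(\<lambda>n. real ((2*n+1)^d - (2*(n-a)+1)^d) / real ((2*n+1)^d)) \<longlonglongrightarrow> 0"
proof -
  have "filterlim (\<lambda>n::nat. 2 * real n + 1) at_top sequentially" by real_asymp
  then have "(\<lambda>n::nat. 2 * real a / (2 * real n + 1)) \<longlonglongrightarrow> 0"
    by (intro tendsto_divide_0[OF tendsto_const] filterlim_at_top_imp_at_infinity)
  then have lim: "(\<lambda>n::nat. 1 - (1 - 2 * real a / (2 * real n + 1)) ^ d) \<longlonglongrightarrow> 1 - (1 - 0) ^ d"
    by (intro tendsto_intros)
  have "eventually (\<lambda>n. 1 - (1 - 2 * real a / (2 * real n + 1)) ^ d =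
          real ((2*n+1)^d - (2*(n-a)+1)^d) / real ((2*n+1)^d)) sequentially"
    using eventually_ge_at_top[of a]
  proof eventually_elim
    case (elim n)
    have le: "(2*(n-a)+1)^d \<le> (2*n+1)^d" by (intro power_mono) auto
    have "1 - 2 * real a / (2 * real n + 1) = real (2*(n-a)+1) / (2 * real n + 1)"
      using elim by (simp add: of_nat_diff field_simps)
    then have "1 - (1 - 2 * real a / (2 * real n + 1)) ^ d = 1 - real ((2*(n-a)+1)^d) / real ((2*n+1)^d)"
      by (simp add: power_divide add.commute)
    also have "\<dots> = real ((2*n+1)^d - (2*(n-a)+1)^d) / real ((2*n+1)^d)"
      using le by (simp add: of_nat_diff field_simps)
    finally show ?case .
  qed
  from Lim_transform_eventually[OF lim this] show ?thesis by simp
qed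

definition scale :: "nat \<Rightarrow> 'd::finite site \<Rightarrow> 'd site" where
  "scale L v = (\<chi> i. int L * v $ i)"

text \<open>The box \<open>box n\<close> is tiled by the disjoint cubes \<open>cube k c\<close> with centres \<open>c\<close> on the grid
  \<open>(2k+1) \<int>\<^sup>d\<close> inside \<open>box (n - k)\<close>, together with a rest of relative size \<open>O(k/n)\<close>.\<close>

definition tile_grid_radius :: "nat \<Rightarrow> nat \<Rightarrow> nat" where
  "tile_grid_radius k n = (n - k) div (2 * k + 1)"

definition tile_centres :: "nat \<Rightarrow> nat \<Rightarrow> 'd::finite site set" where
  "tile_centres k n = scale (2 * k + 1) ` box (tile_grid_radius k n)"

definition tiling_rest :: "nat \<Rightarrow> nat \<Rightarrow> 'd::finite site set" where
  "tiling_rest k n = box n - (\<Union>c\<in>tile_centres k n. cube k c)"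

lemma finite_tile_centres [simp]: "finite (tile_centres k n)"
  by (simp add: tile_centres_def)

lemma finite_tiling_rest [simp]: "finite (tiling_rest k n)"
  by (simp add: tiling_rest_def)

lemma card_tile_centres:
  "card (tile_centres k n :: 'd::finite site set) = (2 * tile_grid_radius k n + 1) ^ CARD('d)"
proof -
  have "inj (scale (2 * k + 1) :: 'd site \<Rightarrow> 'd site)"
    by (rule injI) (simp add: scale_def vec_eq_iff)
  then show ?thesis
    unfolding tile_centres_def by (simp add: card_image inj_on_subset card_box)
qed

lemma card_tile_centres_ge: "real (card (tile_centres k n :: 'd::finite site set)) \<ge> 2 * real (tile_grid_radius k n) + 1"
proof -
  have "(2 * tile_grid_radius k n + 1) ^ 1 \<le> (2 * tile_grid_radius k n + 1) ^ CARD('d)"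
    by (intro power_increasing) (auto simp: Suc_leI)
  then have "2 * tile_grid_radius k n + 1 \<le> card (tile_centres k n :: 'd site set)"
    unfolding card_tile_centres by simp
  then have "real (2 * tile_grid_radius k n + 1) \<le> real (card (tile_centres k n :: 'd site set))"
    by (simp only: of_nat_le_iff)
  then show ?thesis by simp
qed

lemma tile_grid_radius_lower: "real (tile_grid_radius k n) * (2 * real k + 1) \<ge> real n - 3 * real k"
proof -
  have "(n - k) div (2*k+1) * (2*k+1) + (n - k) mod (2*k+1) = n - k" by (rule div_mult_mod_eq)
  moreover have "(n - k) mod (2*k+1) \<le> 2 * k" using pos_mod_bound[of "2*k+1" "n - k"] by simp
  ultimately have "real (tile_grid_radius k n * (2*k+1)) \<ge> real n - 3 * real k"
    unfolding tile_grid_radius_def by linarith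
  then show ?thesis by (simp add: algebra_simps)
qed

lemma tile_grid_cover: "2 * (n - 2 * k) + 1 \<le> (2 * k + 1) * (2 * tile_grid_radius k n + 1)"
proof -
  define r where "r = (n - k) mod (2*k+1)"
  have "(2*k+1) * tile_grid_radius k n + r = n - k"
    unfolding tile_grid_radius_def r_def by (metis div_mult_mod_eq mult.commute)
  moreover have "r \<le> 2 * k" using pos_mod_bound[of "2*k+1" "n - k"] by (simp add: r_def)
  moreover have "(2 * k + 1) * (2 * tile_grid_radius k n + 1) = 2 * ((2*k+1) * tile_grid_radius k n) + (2*k+1)"
    by (simp add: algebra_simps)
  ultimately show ?thesis by linarith
qed

lemma tiles_disjoint:
  assumes "c \<in> tile_centres k n" "c' \<in> tile_centres k n" "c \<noteq> c'"
  shows "cube k c \<inter> cube k c' = {}"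
proof (rule ccontr)
  assume "cube k c \<inter> cube k c' \<noteq> {}"
  then obtain y where y: "y \<in> cube k c" "y \<in> cube k c'" by blast
  obtain v w where vw: "c = scale (2 * k + 1) v" "c' = scale (2 * k + 1) w"
    using assms(1,2) by (auto simp: tile_centres_def)
  have "v \<noteq> w" using assms(3) vw by auto
  then obtain i where i: "v $ i \<noteq> w $ i" by (auto simp: vec_eq_iff)
  have "\<bar>y $ i - c $ i\<bar> \<le> int k" "\<bar>y $ i - c' $ i\<bar> \<le> int k" using y by (auto simp: mem_cube)
  then have "\<bar>int (2 * k + 1) * (v $ i - w $ i)\<bar> \<le> 2 * int k"
    using vw by (simp add: scale_def algebra_simps abs_le_iff)
  moreover have "\<bar>int (2 * k + 1) * (v $ i - w $ i)\<bar> \<ge> int (2 * k + 1)"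
    using i by (simp add: abs_mult)
  ultimately show False by simp
qed

lemma tile_subset_box:
  assumes "k \<le> n" "c \<in> tile_centres k n"
  shows "cube k c \<subseteq> box n"
proof
  fix y assume y: "y \<in> cube k c"
  obtain v where v: "v \<in> box (tile_grid_radius k n)" "c = scale (2 * k + 1) v"
    using assms(2) by (auto simp: tile_centres_def)
  have "(2 * k + 1) * tile_grid_radius k n \<le> n - k"
    unfolding tile_grid_radius_def by (metis div_mult_mod_eq le_add1 mult.commute)
  then have "int (2 * k + 1) * int (tile_grid_radius k n) \<le> int n - int k"
    using assms(1) by (metis of_nat_diff of_nat_le_iff of_nat_mult)
  moreover have "\<bar>v $ i\<bar> \<le> int (tile_grid_radius k n)" "\<bar>y $ i - c $ i\<bar> \<le> int k" for i
    using v y by (auto simp: box_def mem_cube)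
  ultimately have "\<bar>y $ i\<bar> \<le> int n" for i
  proof -
    have "\<bar>int (2 * k + 1) * v $ i\<bar> \<le> int (2 * k + 1) * int (tile_grid_radius k n)"
      using \<open>\<bar>v $ i\<bar> \<le> int (tile_grid_radius k n)\<close> by (simp add: abs_mult mult_left_mono del: of_nat_mult)
    moreover have "y $ i = int (2 * k + 1) * v $ i + (y $ i - c $ i)"
      using v(2) by (simp add: scale_def)
    then have "\<bar>y $ i\<bar> \<le> \<bar>int (2 * k + 1) * v $ i\<bar> + \<bar>y $ i - c $ i\<bar>"
      by (metis abs_triangle_ineq)
    ultimately show ?thesis
      using \<open>int (2 * k + 1) * int (tile_grid_radius k n) \<le> int n - int k\<close> \<open>\<bar>y $ i - c $ i\<bar> \<le> int k\<close>
      by linarith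
  qed
  then show "y \<in> box n" by (simp add: box_def)
qed

lemma box_tiling: "k \<le> n \<Longrightarrow> box n = tiling_rest k n \<union> (\<Union>c\<in>tile_centres k n. cube k c)"
  unfolding tiling_rest_def using tile_subset_box by blast

lemma card_tiles:
  "card (\<Union>c\<in>(tile_centres k n :: 'd::finite site set). cube k c)
     = card (tile_centres k n :: 'd site set) * card (box k :: 'd site set)"
  by (subst card_UN_disjoint) (auto simp: card_cube tiles_disjoint)

lemma card_box_eq_tiles:
  assumes "k \<le> n"
  shows "card (box n :: 'd::finite site set)
     = card (tile_centres k n :: 'd site set) * card (box k :: 'd site set) + card (tiling_rest k n :: 'd site set)"
proof -
  have "card (box n :: 'd site set) = card (tiling_rest k n \<union> (\<Union>c\<in>tile_centres k n. cube k c) :: 'd site set)"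
    using box_tiling[OF assms] by (rule arg_cong)
  also have "\<dots> = card (tiling_rest k n :: 'd site set) + card (\<Union>c\<in>(tile_centres k n :: 'd site set). cube k c)"
    by (rule card_Un_disjoint) (auto simp: tiling_rest_def)
  finally show ?thesis by (simp add: card_tiles)
qed

lemma card_tiling_rest_ratio_tendsto_0:
  "(\<lambda>n. real (card (tiling_rest k n :: 'd::finite site set)) / real (card (box n :: 'd site set))) \<longlonglongrightarrow> 0"
proof (rule tendsto_sandwich[where f="\<lambda>_. 0"])
  show "eventually (\<lambda>n. real (card (tiling_rest k n :: 'd site set)) / real (card (box n :: 'd site set))
     \<le> real ((2*n+1)^CARD('d) - (2*(n-2*k)+1)^CARD('d)) / real ((2*n+1)^CARD('d))) sequentially"
    using eventually_ge_at_top[of k]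
  proof eventually_elim
    case (elim n)
    have "(2 * (n - 2 * k) + 1) ^ CARD('d) \<le> ((2 * k + 1) * (2 * tile_grid_radius k n + 1)) ^ CARD('d)"
      by (rule power_mono[OF tile_grid_cover]) simp
    also have "\<dots> = card (tile_centres k n :: 'd site set) * card (box k :: 'd site set)"
      by (metis card_box card_tile_centres power_mult_distrib mult.commute)
    finally have "card (tiling_rest k n :: 'd site set) \<le> (2*n+1)^CARD('d) - (2*(n-2*k)+1)^CARD('d)"
      using card_box_eq_tiles[OF elim, where 'd='d] by (simp add: card_box)
    then have "real (card (tiling_rest k n :: 'd site set)) \<le> real ((2*n+1)^CARD('d) - (2*(n-2*k)+1)^CARD('d))"
      by (simp only: of_nat_le_iff)
    then show ?case unfolding card_box by (intro divide_right_mono) auto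
  qed
  show "(\<lambda>n. real ((2*n+1)^CARD('d) - (2*(n-2*k)+1)^CARD('d)) / real ((2*n+1)^CARD('d))) \<longlonglongrightarrow> 0"
    by (rule card_box_shell_ratio_tendsto_0)
qed simp_all

section \<open>Finite-range potentials\<close>

locale finite_range_potential =
  fixes \<Phi> :: "'d::finite site set \<Rightarrow> ('d site \<Rightarrow> 'e::finite) \<Rightarrow> ('d site \<Rightarrow> 'f::finite) \<Rightarrow> real"
  assumes potential: "is_defining_potential \<Phi>"
begin

abbreviation H where "H \<Lambda> \<sigma> \<eta> \<equiv> hamiltonian \<Phi> \<Lambda> \<sigma> \<eta>"
abbreviation Z where "Z \<tau> \<Lambda> \<eta> \<equiv> partition_fn \<Phi> \<tau> \<Lambda> \<eta>"

lemma Phi_local: "(\<And>x. x \<in> A \<Longrightarrow> \<sigma> x = \<sigma>' x \<and> \<eta> x = \<eta>' x) \<Longrightarrow> \<Phi> A \<sigma> \<eta> = \<Phi> A \<sigma>' \<eta>'"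
  using conjunct1[OF potential[unfolded is_defining_potential_def]] by simp

lemma Phi_shift: "\<Phi> ((\<lambda>y. x + y) ` A) \<sigma> \<eta> = \<Phi> A (\<lambda>y. \<sigma> (x + y)) (\<lambda>y. \<eta> (x + y))"
  using conjunct2[OF conjunct2[OF potential[unfolded is_defining_potential_def]]] by blast

lemma ex_interaction_range:
  "\<exists>R::nat. \<forall>A \<sigma> \<eta>. finite A \<longrightarrow> (\<exists>x\<in>A. \<exists>y\<in>A. \<exists>i. \<bar>x $ i - y $ i\<bar> > int R) \<longrightarrow> \<Phi> A \<sigma> \<eta> = 0"
proof -
  obtain r :: int where r: "\<forall>A. finite A \<longrightarrow> (\<exists>x\<in>A. \<exists>y\<in>A. \<exists>i. \<bar>x $ i - y $ i\<bar> > r) \<longrightarrow> (\<forall>\<sigma> \<eta>. \<Phi> A \<sigma> \<eta> = 0)"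
    using conjunct1[OF conjunct2[OF potential[unfolded is_defining_potential_def]]] by blast
  show ?thesis
  proof (intro exI[of _ "nat r"] allI impI)
    fix A :: "'d site set" and \<sigma> \<eta>
    assume "finite A" "\<exists>x\<in>A. \<exists>y\<in>A. \<exists>i. \<bar>x $ i - y $ i\<bar> > int (nat r)"
    then obtain x y i where "x \<in> A" "y \<in> A" "\<bar>x $ i - y $ i\<bar> > int (nat r)" by blast
    moreover have "\<bar>x $ i - y $ i\<bar> > r" using \<open>\<bar>x $ i - y $ i\<bar> > int (nat r)\<close> by linarith
    ultimately have "\<exists>x\<in>A. \<exists>y\<in>A. \<exists>i. \<bar>x $ i - y $ i\<bar> > r" by blast
    with r \<open>finite A\<close> show "\<Phi> A \<sigma> \<eta> = 0" by blast
  qed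
qed

definition interaction_range :: nat where
  "interaction_range = (SOME R::nat. \<forall>A \<sigma> \<eta>. finite A \<longrightarrow>
      (\<exists>x\<in>A. \<exists>y\<in>A. \<exists>i. \<bar>x $ i - y $ i\<bar> > int R) \<longrightarrow> \<Phi> A \<sigma> \<eta> = 0)"

definition within_range :: "'d site set \<Rightarrow> bool" where
  "within_range A \<longleftrightarrow> finite A \<and> (\<forall>x\<in>A. \<forall>y\<in>A. \<forall>i. \<bar>x $ i - y $ i\<bar> \<le> int interaction_range)"

lemma Phi_eq_0: "finite A \<Longrightarrow> \<not> within_range A \<Longrightarrow> \<Phi> A \<sigma> \<eta> = 0"
  using someI_ex[OF ex_interaction_range] unfolding within_range_def interaction_range_def
  by (meson not_le)

lemma within_range_finite: "within_range A \<Longrightarrow> finite A"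
  by (simp add: within_range_def)

lemma within_range_subset_cube: "within_range A \<Longrightarrow> x \<in> A \<Longrightarrow> A \<subseteq> cube interaction_range x"
  unfolding within_range_def by (auto simp: mem_cube)

lemma within_range_shift: "within_range ((\<lambda>y. c + y) ` A) \<longleftrightarrow> within_range A"
proof -
  have inj: "inj_on (\<lambda>y. c + y) A" by (auto simp: inj_on_def)
  then show ?thesis unfolding within_range_def finite_image_iff[OF inj] by auto
qed

definition pot_bound :: real where
  "pot_bound = Max ((\<lambda>(A, s, t). \<bar>\<Phi> A s t\<bar>) `
     (Pow (box interaction_range) \<times> Pi\<^sub>E (box interaction_range) (\<lambda>_. UNIV) \<times> Pi\<^sub>E (box interaction_range) (\<lambda>_. UNIV)))"

lemma abs_Phi_le_pot_bound_box: "A \<subseteq> box interaction_range \<Longrightarrow> \<bar>\<Phi> A \<sigma> \<eta>\<bar> \<le> pot_bound"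
proof -
  let ?B = "box interaction_range :: 'd site set"
  assume A: "A \<subseteq> ?B"
  have "\<Phi> A \<sigma> \<eta> = \<Phi> A (restrict \<sigma> ?B) (restrict \<eta> ?B)"
    using A by (intro Phi_local) auto
  moreover have "(A, restrict \<sigma> ?B, restrict \<eta> ?B) \<in> Pow ?B \<times> Pi\<^sub>E ?B (\<lambda>_. UNIV) \<times> Pi\<^sub>E ?B (\<lambda>_. UNIV)"
    using A by auto
  moreover have "finite (Pow ?B \<times> Pi\<^sub>E ?B (\<lambda>_. UNIV :: 'e set) \<times> Pi\<^sub>E ?B (\<lambda>_. UNIV :: 'f set))"
    by (intro finite_cartesian_product finite_PiE) auto
  ultimately show ?thesis unfolding pot_bound_def
    by (intro Max_ge finite_imageI) (auto intro!: image_eqI[where x="(A, restrict \<sigma> ?B, restrict \<eta> ?B)"])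
qed

lemma pot_bound_nonneg: "pot_bound \<ge> 0"
  using abs_Phi_le_pot_bound_box[of "{}"] by (meson abs_ge_zero empty_subsetI order_trans)

lemma abs_Phi_le_pot_bound: "finite A \<Longrightarrow> \<bar>\<Phi> A \<sigma> \<eta>\<bar> \<le> pot_bound"
proof (cases "within_range A \<and> A \<noteq> {}")
  case True
  then obtain a where a: "a \<in> A" by auto
  define A' where "A' = (\<lambda>y. y - a) ` A"
  have A: "A = (\<lambda>y. a + y) ` A'" unfolding A'_def by (auto simp: image_image)
  have "A' \<subseteq> box interaction_range"
    using within_range_subset_cube[OF conjunct1[OF True] a] unfolding A'_def by (auto simp: mem_cube box_def)
  then show ?thesis unfolding A Phi_shift by (rule abs_Phi_le_pot_bound_box)
next
  case False
  then show "finite A \<Longrightarrow> ?thesis"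
    using Phi_eq_0 pot_bound_nonneg abs_Phi_le_pot_bound_box[of "{}"] by auto
qed

definition bonds_meeting :: "'d site set \<Rightarrow> 'd site set set" where
  "bonds_meeting \<Lambda> = {A. within_range A \<and> A \<inter> \<Lambda> \<noteq> {}}"

definition boundary_bonds :: "'d site set \<Rightarrow> 'd site set set" where
  "boundary_bonds \<Lambda> = {A \<in> bonds_meeting \<Lambda>. \<not> A \<subseteq> \<Lambda>}"

definition inner_boundary :: "'d site set \<Rightarrow> 'd site set" where
  "inner_boundary \<Lambda> = {x \<in> \<Lambda>. \<not> cube interaction_range x \<subseteq> \<Lambda>}"

definition boundary_cost :: "'d site set \<Rightarrow> real" where
  "boundary_cost \<Lambda> = 2 * pot_bound * card (boundary_bonds \<Lambda>)"

lemma boundary_cost_nonneg: "boundary_cost \<Lambda> \<ge> 0"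
  using pot_bound_nonneg by (simp add: boundary_cost_def)

lemma bonds_meeting_subset: "bonds_meeting \<Lambda> \<subseteq> (\<Union>x\<in>\<Lambda>. Pow (cube interaction_range x))"
  unfolding bonds_meeting_def using within_range_subset_cube by blast

lemma boundary_bonds_subset: "boundary_bonds \<Lambda> \<subseteq> (\<Union>x\<in>inner_boundary \<Lambda>. Pow (cube interaction_range x))"
  unfolding boundary_bonds_def bonds_meeting_def inner_boundary_def
  using within_range_subset_cube by blast

lemma finite_bonds_meeting: "finite \<Lambda> \<Longrightarrow> finite (bonds_meeting \<Lambda>)"
  by (rule finite_subset[OF bonds_meeting_subset]) auto

lemma finite_boundary_bonds: "finite \<Lambda> \<Longrightarrow> finite (boundary_bonds \<Lambda>)"
  unfolding boundary_bonds_def using finite_bonds_meeting by auto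

lemma card_Union_Pow_cube_le:
  fixes S :: "'d site set"
  shows "finite S \<Longrightarrow> card (\<Union>x\<in>S. Pow (cube interaction_range x)) \<le> card S * 2 ^ card (box interaction_range :: 'd site set)"
  using card_UN_le[of S "\<lambda>x. Pow (cube interaction_range x)"] by (simp add: card_Pow card_cube)

lemma card_bonds_meeting:
  "finite \<Lambda> \<Longrightarrow> card (bonds_meeting \<Lambda>) \<le> card \<Lambda> * 2 ^ card (box interaction_range :: 'd site set)"
  by (rule order_trans[OF card_mono[OF _ bonds_meeting_subset] card_Union_Pow_cube_le]) auto

lemma card_boundary_bonds:
  "finite \<Lambda> \<Longrightarrow> card (boundary_bonds \<Lambda>) \<le> card (inner_boundary \<Lambda>) * 2 ^ card (box interaction_range :: 'd site set)"
  by (rule order_trans[OF card_mono[OF _ boundary_bonds_subset] card_Union_Pow_cube_le])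
     (auto simp: inner_boundary_def)

lemma hamiltonian_eq_sum: "finite \<Lambda> \<Longrightarrow> H \<Lambda> \<sigma> \<eta> = (\<Sum>A\<in>bonds_meeting \<Lambda>. \<Phi> A \<sigma> \<eta>)"
proof -
  have "H \<Lambda> \<sigma> \<eta> = infsum (\<lambda>A. \<Phi> A \<sigma> \<eta>) (bonds_meeting \<Lambda>)"
    unfolding hamiltonian_def
    by (rule infsum_cong_neutral) (auto simp: bonds_meeting_def Phi_eq_0 within_range_finite)
  then show "finite \<Lambda> \<Longrightarrow> ?thesis" by (simp add: finite_bonds_meeting)
qed

lemma sum_abs_Phi_le:
  assumes "\<And>A. A \<in> S \<Longrightarrow> finite A"
  shows "(\<Sum>A\<in>S. \<bar>\<Phi> A \<sigma> \<eta>\<bar>) \<le> card S * pot_bound"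
  using sum_mono[of S "\<lambda>A. \<bar>\<Phi> A \<sigma> \<eta>\<bar>" "\<lambda>_. pot_bound"] assms abs_Phi_le_pot_bound by simp

lemma abs_hamiltonian_le: "finite \<Lambda> \<Longrightarrow> \<bar>H \<Lambda> \<sigma> \<eta>\<bar> \<le> card (bonds_meeting \<Lambda>) * pot_bound"
  unfolding hamiltonian_eq_sum
  by (rule order_trans[OF sum_abs sum_abs_Phi_le]) (auto simp: bonds_meeting_def within_range_finite)

text \<open>Only the boundary bonds see the configuration outside \<open>\<Lambda>\<close>.\<close>

lemma hamiltonian_local_change:
  assumes fin: "finite \<Lambda>" and agree: "\<And>x. x \<in> \<Lambda> \<Longrightarrow> \<sigma> x = \<sigma>' x \<and> \<eta> x = \<eta>' x"
  shows "\<bar>H \<Lambda> \<sigma> \<eta> - H \<Lambda> \<sigma>' \<eta>'\<bar> \<le> boundary_cost \<Lambda>"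
proof -
  have sub: "boundary_bonds \<Lambda> \<subseteq> bonds_meeting \<Lambda>" by (auto simp: boundary_bonds_def)
  have "(\<Sum>A\<in>bonds_meeting \<Lambda> - boundary_bonds \<Lambda>. \<Phi> A \<sigma> \<eta>) = (\<Sum>A\<in>bonds_meeting \<Lambda> - boundary_bonds \<Lambda>. \<Phi> A \<sigma>' \<eta>')"
    using agree by (intro sum.cong refl Phi_local) (auto simp: boundary_bonds_def)
  then have "H \<Lambda> \<sigma> \<eta> - H \<Lambda> \<sigma>' \<eta>' = (\<Sum>A\<in>boundary_bonds \<Lambda>. \<Phi> A \<sigma> \<eta> - \<Phi> A \<sigma>' \<eta>')"
    unfolding hamiltonian_eq_sum[OF fin] sum.subset_diff[OF sub finite_bonds_meeting[OF fin]]
    by (simp add: sum_subtractf)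
  also have "\<bar>\<dots>\<bar> \<le> (\<Sum>A\<in>boundary_bonds \<Lambda>. \<bar>\<Phi> A \<sigma> \<eta>\<bar> + \<bar>\<Phi> A \<sigma>' \<eta>'\<bar>)"
    by (rule order_trans[OF sum_abs sum_mono]) (rule abs_triangle_ineq4)
  also have "\<dots> \<le> boundary_cost \<Lambda>"
    using sum_abs_Phi_le[of "boundary_bonds \<Lambda>" \<sigma> \<eta>] sum_abs_Phi_le[of "boundary_bonds \<Lambda>" \<sigma>' \<eta>']
    by (simp add: sum.distrib boundary_cost_def boundary_bonds_def bonds_meeting_def within_range_finite
        algebra_simps)
  finally show ?thesis .
qed

lemma bc_configs_eq_image:
  "bc_configs \<tau> \<Lambda> = (\<lambda>s x. if x \<in> \<Lambda> then s x else \<tau> x) ` Pi\<^sub>E \<Lambda> (\<lambda>_. UNIV)"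
proof -
  have "\<sigma> \<in> (\<lambda>s x. if x \<in> \<Lambda> then s x else \<tau> x) ` Pi\<^sub>E \<Lambda> (\<lambda>_. UNIV)" if "\<sigma> \<in> bc_configs \<tau> \<Lambda>" for \<sigma>
    using that by (intro image_eqI[of _ _ "restrict \<sigma> \<Lambda>"]) (auto simp: bc_configs_def)
  then show ?thesis by (auto simp: bc_configs_def)
qed

lemma inj_on_bc_merge: "inj_on (\<lambda>s x. if x \<in> \<Lambda> then s x else \<tau> x) (Pi\<^sub>E \<Lambda> (\<lambda>_. UNIV))"
  by (rule inj_onI) (metis (mono_tags, lifting) PiE_ext)

lemma finite_bc_configs: "finite \<Lambda> \<Longrightarrow> finite (bc_configs (\<tau> :: 'd site \<Rightarrow> 'e) \<Lambda>)"
  unfolding bc_configs_eq_image by (intro finite_imageI finite_PiE) auto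

lemma self_in_bc_configs [simp]: "\<tau> \<in> bc_configs \<tau> \<Lambda>"
  by (simp add: bc_configs_def)

lemma partition_fn_pos: "finite \<Lambda> \<Longrightarrow> Z \<tau> \<Lambda> \<eta> > 0"
  unfolding partition_fn_def by (rule sum_pos2[of _ \<tau>]) (auto simp: finite_bc_configs)

lemma partition_fn_eq_sum_PiE:
  "Z \<tau> \<Lambda> \<eta> = (\<Sum>s\<in>Pi\<^sub>E \<Lambda> (\<lambda>_. UNIV). exp (- H \<Lambda> (\<lambda>x. if x \<in> \<Lambda> then s x else \<tau> x) \<eta>))"
  unfolding partition_fn_def bc_configs_eq_image by (rule sum.reindex[OF inj_on_bc_merge, unfolded comp_def])

lemma partition_fn_mult_close:
  assumes "finite \<Lambda>" "\<And>x. x \<in> \<Lambda> \<Longrightarrow> \<eta> x = \<eta>' x"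
  shows "mult_close (boundary_cost \<Lambda>) (Z \<tau> \<Lambda> \<eta>) (Z \<tau>' \<Lambda> \<eta>')"
  unfolding partition_fn_eq_sum_PiE
  by (intro mult_close_sum mult_close_exp) (use hamiltonian_local_change[OF assms(1)] assms(2) in \<open>auto simp: abs_minus_commute\<close>)

lemma abs_ln_partition_fn_diff_le:
  assumes "finite \<Lambda>" "\<And>x. x \<in> \<Lambda> \<Longrightarrow> \<eta> x = \<eta>' x"
  shows "\<bar>ln (Z \<tau> \<Lambda> \<eta>) - ln (Z \<tau>' \<Lambda> \<eta>')\<bar> \<le> boundary_cost \<Lambda>"
  using partition_fn_mult_close[OF assms] partition_fn_pos[OF assms(1)] by (rule abs_ln_diff_le_if_mult_close)

definition pressure_bound :: real where
  "pressure_bound = ln (real CARD('e)) + pot_bound * 2 ^ card (box interaction_range :: 'd site set)"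

lemma pressure_bound_nonneg: "pressure_bound \<ge> 0"
  unfolding pressure_bound_def using pot_bound_nonneg by (intro add_nonneg_nonneg) (auto simp: card_ge_0_finite)

text \<open>There are \<open>CARD('e) ^ card \<Lambda>\<close> Boltzmann weights, each within a factor
  \<open>exp (card (bonds_meeting \<Lambda>) * pot_bound)\<close> of \<open>1\<close>.\<close>

lemma abs_ln_partition_fn_le: "finite \<Lambda> \<Longrightarrow> \<bar>ln (Z \<tau> \<Lambda> \<eta>)\<bar> \<le> card \<Lambda> * pressure_bound"
proof -
  assume fin: "finite \<Lambda>"
  define h where "h = card (bonds_meeting \<Lambda>) * pot_bound"
  have "mult_close h (Z \<tau> \<Lambda> \<eta>) (\<Sum>s\<in>Pi\<^sub>E \<Lambda> (\<lambda>_. UNIV :: 'e set). exp 0)"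
    unfolding partition_fn_eq_sum_PiE h_def
    by (intro mult_close_sum mult_close_exp) (simp add: abs_hamiltonian_le[OF fin])
  then have "\<bar>ln (Z \<tau> \<Lambda> \<eta>) - card \<Lambda> * ln (real CARD('e))\<bar> \<le> h"
    using abs_ln_diff_le_if_mult_close partition_fn_pos[OF fin]
    by (fastforce simp: card_PiE fin ln_realpow)
  moreover have "h \<le> card \<Lambda> * (pot_bound * 2 ^ card (box interaction_range :: 'd site set))"
    using mult_right_mono[OF card_bonds_meeting[OF fin, THEN of_nat_mono] pot_bound_nonneg]
    by (simp add: h_def algebra_simps)
  moreover have "0 \<le> h" "0 \<le> real (card \<Lambda>) * ln (real CARD('e))"
    using pot_bound_nonneg by (auto simp: h_def card_ge_0_finite)
  ultimately show ?thesis unfolding pressure_bound_def abs_le_iff distrib_left by linarith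
qed

lemma sum_bc_configs_split:
  fixes f :: "('d site \<Rightarrow> 'e) \<Rightarrow> real"
  assumes fin: "finite \<Lambda>" and B: "B \<subseteq> \<Lambda>"
  shows "(\<Sum>s\<in>bc_configs \<tau> \<Lambda>. f s) = (\<Sum>\<sigma>\<in>bc_configs \<tau> (\<Lambda> - B). \<Sum>s\<in>bc_configs \<sigma> B. f s)"
proof -
  have fB: "finite B" using B fin by (rule finite_subset)
  have "(\<Sum>\<sigma>\<in>bc_configs \<tau> (\<Lambda> - B). \<Sum>s\<in>bc_configs \<sigma> B. f s)
      = (\<Sum>(\<sigma>, s)\<in>Sigma (bc_configs \<tau> (\<Lambda> - B)) (\<lambda>\<sigma>. bc_configs \<sigma> B). f s)"
    by (rule sum.Sigma) (auto intro: finite_bc_configs fin fB)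
  also have "\<dots> = (\<Sum>s\<in>bc_configs \<tau> \<Lambda>. f s)"
    by (rule sum.reindex_bij_witness[where j=snd and i="\<lambda>s. (\<lambda>x. if x \<in> B then \<tau> x else s x, s)"])
       (use B in \<open>auto simp: bc_configs_def fun_eq_iff\<close>)
  finally show ?thesis ..
qed

definition cross_energy :: "'d site set \<Rightarrow> 'd site set \<Rightarrow> ('d site \<Rightarrow> 'e) \<Rightarrow> ('d site \<Rightarrow> 'f) \<Rightarrow> real" where
  "cross_energy \<Lambda> B s \<eta> = (\<Sum>A\<in>bonds_meeting \<Lambda> - bonds_meeting B. \<Phi> A s \<eta>)"

lemma hamiltonian_split:
  assumes fin: "finite \<Lambda>" and B: "B \<subseteq> \<Lambda>"
  shows "H \<Lambda> s \<eta> = H B s \<eta> + cross_energy \<Lambda> B s \<eta>"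
proof -
  have "bonds_meeting B \<subseteq> bonds_meeting \<Lambda>" using B by (auto simp: bonds_meeting_def)
  from sum.subset_diff[OF this finite_bonds_meeting[OF fin], of "\<lambda>A. \<Phi> A s \<eta>"] show ?thesis
    unfolding hamiltonian_eq_sum[OF fin] hamiltonian_eq_sum[OF finite_subset[OF B fin]] cross_energy_def
    by linarith
qed

lemma cross_energy_local:
  assumes "s \<in> bc_configs \<sigma> B"
  shows "cross_energy \<Lambda> B s \<eta> = cross_energy \<Lambda> B \<sigma> \<eta>"
  unfolding cross_energy_def
proof (intro sum.cong refl Phi_local conjI)
  fix A x assume "A \<in> bonds_meeting \<Lambda> - bonds_meeting B" "x \<in> A"
  then have "x \<notin> B" by (auto simp: bonds_meeting_def)
  then show "s x = \<sigma> x" using assms by (simp add: bc_configs_def)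
qed

lemma cross_energy_approx:
  assumes fin: "finite \<Lambda>" and B: "B \<subseteq> \<Lambda>"
  shows "\<bar>cross_energy \<Lambda> B \<sigma> \<eta> - H (\<Lambda> - B) \<sigma> \<eta>\<bar> \<le> boundary_cost B"
proof -
  let ?S = "bonds_meeting (\<Lambda> - B) - (bonds_meeting \<Lambda> - bonds_meeting B)"
  have fB: "finite B" using B fin by (rule finite_subset)
  have "bonds_meeting \<Lambda> - bonds_meeting B \<subseteq> bonds_meeting (\<Lambda> - B)" by (auto simp: bonds_meeting_def)
  from sum.subset_diff[OF this finite_bonds_meeting, of "\<lambda>A. \<Phi> A \<sigma> \<eta>"] fin
  have split: "H (\<Lambda> - B) \<sigma> \<eta> = cross_energy \<Lambda> B \<sigma> \<eta> + (\<Sum>A\<in>?S. \<Phi> A \<sigma> \<eta>)"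
    using hamiltonian_eq_sum[of "\<Lambda> - B"] unfolding cross_energy_def by simp
  have "?S \<subseteq> boundary_bonds B"
    using B by (auto simp: bonds_meeting_def boundary_bonds_def)
  then have card_S: "card ?S \<le> card (boundary_bonds B)"
    by (rule card_mono[OF finite_boundary_bonds[OF fB]])
  have "\<bar>\<Sum>A\<in>?S. \<Phi> A \<sigma> \<eta>\<bar> \<le> card ?S * pot_bound"
    by (rule order_trans[OF sum_abs sum_abs_Phi_le]) (auto simp: bonds_meeting_def within_range_finite)
  also have "\<dots> \<le> card (boundary_bonds B) * pot_bound"
    using card_S pot_bound_nonneg by (intro mult_right_mono) simp_all
  also have "\<dots> \<le> boundary_cost B"
    using pot_bound_nonneg by (simp add: boundary_cost_def)
  finally show ?thesis using split by simp
qed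

lemma partition_fn_split_sum:
  assumes fin: "finite \<Lambda>" and B: "B \<subseteq> \<Lambda>"
  shows "Z \<tau> \<Lambda> \<eta> = (\<Sum>\<sigma>\<in>bc_configs \<tau> (\<Lambda> - B). exp (- cross_energy \<Lambda> B \<sigma> \<eta>) * Z \<sigma> B \<eta>)"
  unfolding partition_fn_def sum_bc_configs_split[OF fin B] sum_distrib_left
proof (intro sum.cong refl)
  fix \<sigma> s :: "'d site \<Rightarrow> 'e" assume "s \<in> bc_configs \<sigma> B"
  then have "cross_energy \<Lambda> B s \<eta> = cross_energy \<Lambda> B \<sigma> \<eta>" by (rule cross_energy_local)
  then show "exp (- H \<Lambda> s \<eta>) = exp (- cross_energy \<Lambda> B \<sigma> \<eta>) * exp (- H B s \<eta>)"
    unfolding hamiltonian_split[OF fin B] by (simp add: exp_add[symmetric] algebra_simps)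
qed

text \<open>Cutting \<open>\<Lambda>\<close> into \<open>B\<close> and \<open>\<Lambda> - B\<close> only costs the bonds crossing the boundary of \<open>B\<close>.\<close>

lemma partition_fn_split:
  assumes fin: "finite \<Lambda>" and B: "B \<subseteq> \<Lambda>"
  shows "mult_close (2 * boundary_cost B) (Z \<tau> \<Lambda> \<eta>) (Z \<tau> B \<eta> * Z \<tau> (\<Lambda> - B) \<eta>)"
proof -
  have fB: "finite B" using B fin by (rule finite_subset)
  have "mult_close (boundary_cost B + boundary_cost B)
      (\<Sum>\<sigma>\<in>bc_configs \<tau> (\<Lambda> - B). exp (- cross_energy \<Lambda> B \<sigma> \<eta>) * Z \<sigma> B \<eta>)
      (\<Sum>\<sigma>\<in>bc_configs \<tau> (\<Lambda> - B). exp (- H (\<Lambda> - B) \<sigma> \<eta>) * Z \<tau> B \<eta>)"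
    by (intro mult_close_sum mult_close_mult mult_close_exp partition_fn_mult_close fB)
       (use cross_energy_approx[OF fin B] partition_fn_pos[OF fB] in \<open>auto simp: abs_minus_commute less_imp_le\<close>)
  then show ?thesis
    by (simp add: partition_fn_split_sum[OF fin B] partition_fn_def[of _ _ "\<Lambda> - B"] sum_distrib_left mult.commute)
qed

lemma abs_ln_partition_fn_split:
  assumes fin: "finite \<Lambda>" and B: "B \<subseteq> \<Lambda>"
  shows "\<bar>ln (Z \<tau> \<Lambda> \<eta>) - ln (Z \<tau> B \<eta>) - ln (Z \<tau> (\<Lambda> - B) \<eta>)\<bar> \<le> 2 * boundary_cost B"
proof -
  have "ln (Z \<tau> B \<eta> * Z \<tau> (\<Lambda> - B) \<eta>) = ln (Z \<tau> B \<eta>) + ln (Z \<tau> (\<Lambda> - B) \<eta>)"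
    using fin finite_subset[OF B fin] by (intro ln_mult_pos partition_fn_pos) auto
  then show ?thesis
    using abs_ln_diff_le_if_mult_close[OF partition_fn_split[OF assms] partition_fn_pos[OF fin], of \<tau> \<eta>]
    by (simp add: diff_diff_eq)
qed

definition cyl_weight :: "('d site \<Rightarrow> 'e) \<Rightarrow> 'd site set \<Rightarrow> 'd site set \<Rightarrow> ('d site \<Rightarrow> 'e) \<Rightarrow> ('d site \<Rightarrow> 'f) \<Rightarrow> real" where
  "cyl_weight \<tau> \<Lambda> B \<sigma>q \<eta> = (\<Sum>s\<in>bc_configs \<tau> \<Lambda>. if \<forall>x\<in>B. s x = \<sigma>q x then exp (- H \<Lambda> s \<eta>) else 0)"

lemma cyl_weight_split_sum:
  assumes fin: "finite \<Lambda>" and B: "B \<subseteq> \<Lambda>"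
  shows "cyl_weight \<tau> \<Lambda> B \<sigma>q \<eta> = (\<Sum>\<sigma>\<in>bc_configs \<tau> (\<Lambda> - B).
            exp (- cross_energy \<Lambda> B \<sigma> \<eta>) * exp (- H B (\<lambda>x. if x \<in> B then \<sigma>q x else \<sigma> x) \<eta>))"
  unfolding cyl_weight_def sum_bc_configs_split[OF fin B]
proof (intro sum.cong refl)
  fix \<sigma>
  define u where "u = (\<lambda>x. if x \<in> B then \<sigma>q x else \<sigma> x)"
  have u: "u \<in> bc_configs \<sigma> B" by (simp add: u_def bc_configs_def)
  have "(\<forall>x\<in>B. s x = \<sigma>q x) \<longleftrightarrow> u = s" if "s \<in> bc_configs \<sigma> B" for s
    using that by (auto simp: u_def bc_configs_def fun_eq_iff)
  then have "(\<Sum>s\<in>bc_configs \<sigma> B. if \<forall>x\<in>B. s x = \<sigma>q x then exp (- H \<Lambda> s \<eta>) else 0) = exp (- H \<Lambda> u \<eta>)"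
    using u finite_bc_configs[OF finite_subset[OF B fin]] by (simp cong: if_cong)
  also have "\<dots> = exp (- cross_energy \<Lambda> B \<sigma> \<eta>) * exp (- H B u \<eta>)"
    by (simp add: hamiltonian_split[OF fin B] cross_energy_local[OF u] exp_diff exp_minus field_simps)
  finally show "(\<Sum>s\<in>bc_configs \<sigma> B. if \<forall>x\<in>B. s x = \<sigma>q x then exp (- H \<Lambda> s \<eta>) else 0)
      = exp (- cross_energy \<Lambda> B \<sigma> \<eta>) * exp (- H B (\<lambda>x. if x \<in> B then \<sigma>q x else \<sigma> x) \<eta>)"
    by (simp add: u_def)
qed

text \<open>Numerator and denominator carry the same cross energies, which cancel in the ratio.\<close>

lemma cyl_weight_ratio:
  assumes fin: "finite \<Lambda>" and B: "B \<subseteq> \<Lambda>"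
  shows "mult_close (2 * boundary_cost B) (cyl_weight \<tau> \<Lambda> B \<sigma>q \<eta> / Z \<tau> \<Lambda> \<eta>) (exp (- H B \<sigma>q \<eta>) / Z \<tau> B \<eta>)"
proof -
  have fB: "finite B" using B fin by (rule finite_subset)
  define S where "S = (\<Sum>\<sigma>\<in>bc_configs \<tau> (\<Lambda> - B). exp (- cross_energy \<Lambda> B \<sigma> \<eta>))"
  have S: "S > 0" unfolding S_def using fin by (intro sum_pos2[of _ \<tau>]) (auto simp: finite_bc_configs)
  have "mult_close (boundary_cost B) (cyl_weight \<tau> \<Lambda> B \<sigma>q \<eta>) (S * exp (- H B \<sigma>q \<eta>))"
    unfolding cyl_weight_split_sum[OF fin B] S_def sum_distrib_right
    by (intro mult_close_sum mult_close_mult[where c=0, simplified] mult_close_exp)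
       (auto simp: mult_close_def hamiltonian_local_change[OF fB])
  moreover have "mult_close (boundary_cost B) (Z \<tau> \<Lambda> \<eta>) (S * Z \<tau> B \<eta>)"
    unfolding partition_fn_split_sum[OF fin B] S_def sum_distrib_right
    by (intro mult_close_sum mult_close_mult[where c=0, simplified] partition_fn_mult_close fB)
       (use partition_fn_pos[OF fB] in \<open>auto simp: mult_close_def less_imp_le\<close>)
  ultimately have "mult_close (boundary_cost B + boundary_cost B)
      (cyl_weight \<tau> \<Lambda> B \<sigma>q \<eta> / Z \<tau> \<Lambda> \<eta>) (S * exp (- H B \<sigma>q \<eta>) / (S * Z \<tau> B \<eta>))"
    by (intro mult_close_divide partition_fn_pos fin) (auto simp: cyl_weight_def intro: sum_nonneg)
  then show ?thesis using S by simp
qed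

lemma inj_on_translate_image:
  fixes c :: "'d site"
  shows "inj_on (\<lambda>A. (\<lambda>y. c + y) ` A) X"
proof -
  have "inj (\<lambda>y::'d site. c + y)" by (rule injI) simp
  then show ?thesis by (simp add: inj_on_def inj_image_eq_iff)
qed

lemma bonds_meeting_translate: "bonds_meeting ((\<lambda>y. c + y) ` \<Lambda>) = (\<lambda>A. (\<lambda>y. c + y) ` A) ` bonds_meeting \<Lambda>"
proof (intro equalityI subsetI)
  fix A assume A: "A \<in> bonds_meeting ((\<lambda>y. c + y) ` \<Lambda>)"
  have "A = (\<lambda>y. c + y) ` ((\<lambda>y. - c + y) ` A)" by (auto simp: image_image)
  moreover have "(\<lambda>y. - c + y) ` A \<in> bonds_meeting \<Lambda>"
    using A within_range_shift[of "- c" A] by (force simp: bonds_meeting_def)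
  ultimately show "A \<in> (\<lambda>A. (\<lambda>y. c + y) ` A) ` bonds_meeting \<Lambda>" by blast
qed (auto simp: bonds_meeting_def within_range_shift)

lemma boundary_cost_translate: "boundary_cost ((\<lambda>y. c + y) ` \<Lambda>) = boundary_cost \<Lambda>"
proof -
  have "boundary_bonds ((\<lambda>y. c + y) ` \<Lambda>) = (\<lambda>A. (\<lambda>y. c + y) ` A) ` boundary_bonds \<Lambda>"
    unfolding boundary_bonds_def bonds_meeting_translate by (auto simp: inj_image_subset_iff inj_on_def)
  then show ?thesis unfolding boundary_cost_def by (simp add: card_image[OF inj_on_translate_image])
qed

lemma hamiltonian_translate:
  "finite \<Lambda> \<Longrightarrow> H ((\<lambda>y. c + y) ` \<Lambda>) \<sigma> \<eta> = H \<Lambda> (\<lambda>y. \<sigma> (c + y)) (\<lambda>y. \<eta> (c + y))"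
  by (simp add: hamiltonian_eq_sum bonds_meeting_translate sum.reindex[OF inj_on_translate_image] Phi_shift)

lemma partition_fn_translate:
  assumes fin: "finite \<Lambda>"
  shows "Z \<tau> ((\<lambda>y. c + y) ` \<Lambda>) \<eta> = Z (\<lambda>y. \<tau> (c + y)) \<Lambda> (\<lambda>y. \<eta> (c + y))"
  unfolding partition_fn_def hamiltonian_translate[OF fin]
proof (rule sum.reindex_bij_witness[where i="\<lambda>t x. t (x - c)" and j="\<lambda>s y. s (c + y)"])
  fix t assume "t \<in> bc_configs (\<lambda>y. \<tau> (c + y)) \<Lambda>"
  then show "(\<lambda>x. t (x - c)) \<in> bc_configs \<tau> ((\<lambda>y. c + y) ` \<Lambda>)"
    by (auto simp: bc_configs_def) (metis add.commute diff_add_cancel image_eqI)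
next
  fix s assume "s \<in> bc_configs \<tau> ((\<lambda>y. c + y) ` \<Lambda>)"
  moreover have "c + x \<notin> (\<lambda>y. c + y) ` \<Lambda>" if "x \<notin> \<Lambda>" for x using that by auto
  ultimately show "(\<lambda>y. s (c + y)) \<in> bc_configs (\<lambda>y. \<tau> (c + y)) \<Lambda>"
    by (simp add: bc_configs_def)
qed (auto simp: bc_configs_def)

lemma partition_fn_cube:
  "Z \<tau> (cube k c) \<eta> = Z (\<lambda>y. \<tau> (c + y)) (box k) (\<lambda>y. \<eta> (c + y))"
  unfolding cube_def by (rule partition_fn_translate) simp

lemma boundary_cost_cube: "boundary_cost (cube k c) = boundary_cost (box k)"
  unfolding cube_def by (rule boundary_cost_translate)

lemma inner_boundary_box:
  assumes "interaction_range \<le> n"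
  shows "inner_boundary (box n) \<subseteq> box n - box (n - interaction_range)"
proof
  fix x assume x: "x \<in> inner_boundary (box n)"
  have "cube interaction_range x \<subseteq> box n" if "x \<in> box (n - interaction_range)"
    using that assms by (auto simp: mem_cube box_def abs_le_iff of_nat_diff) (smt (verit))+
  then show "x \<in> box n - box (n - interaction_range)" using x by (auto simp: inner_boundary_def)
qed

lemma boundary_cost_box_ratio_tendsto_0:
  "(\<lambda>n. boundary_cost (box n) / real (card (box n :: 'd site set))) \<longlonglongrightarrow> 0"
proof (rule tendsto_sandwich[where f="\<lambda>_. 0"])
  let ?R = interaction_range and ?d = "CARD('d)"
  define K where "K = 2 * pot_bound * 2 ^ card (box ?R :: 'd site set)"
  show "eventually (\<lambda>n. boundary_cost (box n) / real (card (box n :: 'd site set))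
      \<le> K * (real ((2*n+1)^?d - (2*(n-?R)+1)^?d) / real ((2*n+1)^?d))) sequentially"
    using eventually_ge_at_top[of ?R]
  proof eventually_elim
    case (elim n)
    have "card (inner_boundary (box n :: 'd site set)) \<le> card (box n - box (n - ?R) :: 'd site set)"
      by (rule card_mono[OF _ inner_boundary_box[OF elim]]) simp
    also have "\<dots> = (2*n+1)^?d - (2*(n-?R)+1)^?d"
      by (simp add: card_Diff_subset box_mono card_box)
    finally have "card (boundary_bonds (box n :: 'd site set)) \<le> ((2*n+1)^?d - (2*(n-?R)+1)^?d) * 2 ^ card (box ?R :: 'd site set)"
      using card_boundary_bonds[of "box n"] by (meson le_trans finite_box mult_le_mono1)
    then have "real (card (boundary_bonds (box n :: 'd site set))) \<le> real ((2*n+1)^?d - (2*(n-?R)+1)^?d) * 2 ^ card (box ?R :: 'd site set)"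
      by (metis of_nat_le_iff of_nat_mult of_nat_numeral of_nat_power)
    then have "boundary_cost (box n) \<le> K * real ((2*n+1)^?d - (2*(n-?R)+1)^?d)"
      using pot_bound_nonneg mult_left_mono[of _ _ "2 * pot_bound"]
      by (fastforce simp: boundary_cost_def K_def ac_simps)
    then show ?case unfolding card_box by (simp add: divide_right_mono)
  qed
  show "(\<lambda>n. K * (real ((2*n+1)^?d - (2*(n-?R)+1)^?d) / real ((2*n+1)^?d))) \<longlonglongrightarrow> 0"
    by (rule tendsto_mult_right_zero[OF card_box_shell_ratio_tendsto_0])
qed (simp_all add: boundary_cost_nonneg)

lemma abs_ln_partition_fn_tiling:
  assumes "k \<le> n"
  shows "\<bar>ln (Z \<tau> (box n) \<eta>) - ln (Z \<tau> (tiling_rest k n) \<eta>) - (\<Sum>c\<in>tile_centres k n. ln (Z \<tau> (cube k c) \<eta>))\<bar>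
          \<le> real (card (tile_centres k n :: 'd site set)) * (2 * boundary_cost (box k))"
proof -
  have "\<bar>ln (Z \<tau> (tiling_rest k n \<union> (\<Union>c\<in>J. cube k c)) \<eta>) - ln (Z \<tau> (tiling_rest k n) \<eta>)
      - (\<Sum>c\<in>J. ln (Z \<tau> (cube k c) \<eta>))\<bar> \<le> real (card J) * (2 * boundary_cost (box k))"
    if "J \<subseteq> tile_centres k n" for J
    using finite_subset[OF that finite_tile_centres] that
  proof (induction J rule: finite_induct)
    case (insert c J)
    define \<Lambda> where "\<Lambda> = tiling_rest k n \<union> (\<Union>c\<in>insert c J. cube k c)"
    have "\<Lambda> - cube k c = tiling_rest k n \<union> (\<Union>c\<in>J. cube k c)"
      using insert tiles_disjoint[of c k n] by (auto simp: \<Lambda>_def tiling_rest_def)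
    moreover have "finite \<Lambda>" "cube k c \<subseteq> \<Lambda>" using insert.hyps(1) by (auto simp: \<Lambda>_def)
    note abs_ln_partition_fn_split[OF this, of \<tau> \<eta>]
    ultimately show ?case
      using insert unfolding \<Lambda>_def[symmetric] sum.insert[OF insert.hyps(1,2)]
      by (simp add: boundary_cost_cube algebra_simps abs_le_iff)
  qed simp
  from this[OF order_refl] show ?thesis by (simp flip: box_tiling[OF assms])
qed

end

section \<open>Local functions of the disorder\<close>

lemma (in prob_space) abs_integral_diff_le:
  fixes f g :: "'a \<Rightarrow> real"
  assumes f: "integrable M f" and g: "integrable M g" and bound: "AE x in M. \<bar>f x - g x\<bar> \<le> c"
  shows "\<bar>(\<integral>x. f x \<partial>M) - (\<integral>x. g x \<partial>M)\<bar> \<le> c"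
proof -
  have "(\<integral>x. f x - g x \<partial>M) \<le> c"
    by (rule integral_le_const) (use f g bound in \<open>auto elim!: eventually_mono\<close>)
  moreover have "- c \<le> (\<integral>x. f x - g x \<partial>M)"
    by (rule integral_ge_const) (use f g bound in \<open>auto elim!: eventually_mono\<close>)
  ultimately show ?thesis using f g by (simp add: abs_le_iff)
qed

lemma (in prob_space) mult_close_integral:
  fixes f g :: "'a \<Rightarrow> real"
  assumes f: "integrable M f" and g: "integrable M g" and close: "AE x in M. mult_close c (f x) (g x)"
  shows "mult_close c (\<integral>x. f x \<partial>M) (\<integral>x. g x \<partial>M)"
proof -
  have "(\<integral>x. f x \<partial>M) \<le> (\<integral>x. exp c * g x \<partial>M)"
    by (rule integral_mono_AE) (use f g close in \<open>auto simp: mult_close_def elim!: eventually_mono\<close>)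
  moreover have "(\<integral>x. g x \<partial>M) \<le> (\<integral>x. exp c * f x \<partial>M)"
    by (rule integral_mono_AE) (use f g close in \<open>auto simp: mult_close_def elim!: eventually_mono\<close>)
  ultimately show ?thesis by (simp add: mult_close_def)
qed

definition local_on :: "'a set \<Rightarrow> (('a \<Rightarrow> 'f) \<Rightarrow> 'b) \<Rightarrow> bool" where
  "local_on W f \<longleftrightarrow> (\<forall>\<eta> \<eta>'. (\<forall>x\<in>W. \<eta> x = \<eta>' x) \<longrightarrow> f \<eta> = f \<eta>')"

lemma local_onI: "(\<And>\<eta> \<eta>'. (\<And>x. x \<in> W \<Longrightarrow> \<eta> x = \<eta>' x) \<Longrightarrow> f \<eta> = f \<eta>') \<Longrightarrow> local_on W f"
  unfolding local_on_def by blast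

lemma local_onD: "local_on W f \<Longrightarrow> (\<And>x. x \<in> W \<Longrightarrow> \<eta> x = \<eta>' x) \<Longrightarrow> f \<eta> = f \<eta>'"
  unfolding local_on_def by blast

lemma local_on_restrict: "local_on W f \<Longrightarrow> f (restrict \<eta> W) = f \<eta>"
  by (erule local_onD) simp

lemma local_on_comp: "local_on W f \<Longrightarrow> local_on W (\<lambda>\<eta>. g (f \<eta>))"
  unfolding local_on_def by metis

locale quenched_model = finite_range_potential \<Phi>
  for \<Phi> :: "'d::finite site set \<Rightarrow> ('d site \<Rightarrow> 'e::finite) \<Rightarrow> ('d site \<Rightarrow> 'f::finite) \<Rightarrow> real" +
  fixes p :: "'f pmf" and P :: "('d site \<Rightarrow> 'f) measure"
  assumes P_def: "P = PiM UNIV (\<lambda>_. measure_pmf p)"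

sublocale quenched_model \<subseteq> PP: product_prob_space "\<lambda>_::'d site. measure_pmf p" "UNIV :: 'd site set"
  by unfold_locales

sublocale quenched_model \<subseteq> Pr: prob_space P
  unfolding P_def by (rule prob_space_PiM) (rule prob_space_measure_pmf)

context quenched_model
begin

lemma space_P [simp]: "space P = UNIV"
  by (simp add: P_def space_PiM)

lemma sets_finite_PiM:
  fixes W :: "'d site set"
  assumes W: "finite W" and A: "A \<subseteq> space (PiM W (\<lambda>_. measure_pmf p))"
  shows "A \<in> sets (PiM W (\<lambda>_. measure_pmf p))"
proof -
  have sp: "space (PiM W (\<lambda>_. measure_pmf p)) = Pi\<^sub>E W (\<lambda>_. UNIV)" by (simp add: space_PiM)
  have fA: "finite A" using A W unfolding sp by (rule finite_subset[OF _ finite_PiE]) auto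
  have "A = (\<Union>\<zeta>\<in>A. {\<zeta>})" by auto
  also have "\<dots> \<in> sets (PiM W (\<lambda>_. measure_pmf p))"
  proof (rule sets.finite_UN[OF fA])
    fix \<zeta> assume "\<zeta> \<in> A"
    then have "\<zeta> \<in> extensional W" using A unfolding sp by (auto simp: PiE_def)
    then have "{\<zeta>} = Pi\<^sub>E W (\<lambda>x. {\<zeta> x})" by (simp add: PiE_singleton)
    also have "\<dots> \<in> sets (PiM W (\<lambda>_. measure_pmf p))" by (rule sets_PiM_I_finite[OF W]) auto
    finally show "{\<zeta>} \<in> sets (PiM W (\<lambda>_. measure_pmf p))" .
  qed
  finally show ?thesis .
qed

lemma measurable_finite_PiM:
  fixes W :: "'d site set" and g :: "('d site \<Rightarrow> 'f) \<Rightarrow> real"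
  assumes "finite W"
  shows "g \<in> borel_measurable (PiM W (\<lambda>_. measure_pmf p))"
  by (rule measurableI) (auto intro: sets_finite_PiM[OF assms])

lemma borel_measurable_local:
  fixes f :: "('d site \<Rightarrow> 'f) \<Rightarrow> real"
  assumes "finite W" "local_on W f"
  shows "f \<in> borel_measurable P"
proof -
  have "(\<lambda>\<eta>. f (restrict \<eta> W)) \<in> borel_measurable P"
    unfolding P_def by (rule measurable_compose[OF measurable_restrict_subset measurable_finite_PiM[OF assms(1)]]) simp
  then show ?thesis using local_on_restrict[OF assms(2)] by simp
qed

definition disorder_cyl :: "'d site set \<Rightarrow> ('d site \<Rightarrow> 'f) \<Rightarrow> ('d site \<Rightarrow> 'f) set" where
  "disorder_cyl W \<zeta> = {\<eta>. \<forall>x\<in>W. \<eta> x = \<zeta> x}"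

lemma disorder_cyl_eq_prod_emb:
  "disorder_cyl W \<zeta> = prod_emb UNIV (\<lambda>_. measure_pmf p) W (Pi\<^sub>E W (\<lambda>x. {\<zeta> x}))"
  by (auto simp: disorder_cyl_def prod_emb_def space_PiM PiE_iff)

lemma disorder_cyl_sets: "finite W \<Longrightarrow> disorder_cyl W \<zeta> \<in> sets P"
  unfolding disorder_cyl_eq_prod_emb P_def by (rule sets_PiM_I) auto

lemma measure_disorder_cyl: "finite W \<Longrightarrow> measure P (disorder_cyl W \<zeta>) = (\<Prod>x\<in>W. pmf p (\<zeta> x))"
  unfolding disorder_cyl_eq_prod_emb P_def by (subst PP.measure_PiM_emb) (auto simp: measure_pmf_single)

lemma local_eq_sum_cyl:
  fixes f :: "('d site \<Rightarrow> 'f) \<Rightarrow> real"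
  assumes W: "finite W" and loc: "local_on W f"
  shows "f \<eta> = (\<Sum>\<zeta>\<in>Pi\<^sub>E W (\<lambda>_. UNIV). f \<zeta> * indicator (disorder_cyl W \<zeta>) \<eta>)"
proof -
  have "\<eta> \<in> disorder_cyl W \<zeta> \<longleftrightarrow> restrict \<eta> W = \<zeta>" if "\<zeta> \<in> Pi\<^sub>E W (\<lambda>_. UNIV)" for \<zeta>
    using that by (auto simp: disorder_cyl_def PiE_def extensional_def)
  then have "(\<Sum>\<zeta>\<in>Pi\<^sub>E W (\<lambda>_. UNIV). f \<zeta> * indicator (disorder_cyl W \<zeta>) \<eta>)
      = (\<Sum>\<zeta>\<in>Pi\<^sub>E W (\<lambda>_. UNIV). if restrict \<eta> W = \<zeta> then f \<zeta> else 0)"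
    by (intro sum.cong refl) (simp add: indicator_def)
  also have "\<dots> = f \<eta>" using W by (simp add: finite_PiE local_on_restrict[OF loc])
  finally show ?thesis ..
qed

lemma integrable_local:
  fixes f :: "('d site \<Rightarrow> 'f) \<Rightarrow> real"
  assumes "finite W" "local_on W f"
  shows "integrable P f"
proof -
  have "integrable P (\<lambda>\<eta>. \<Sum>\<zeta>\<in>Pi\<^sub>E W (\<lambda>_. UNIV). f \<zeta> * indicator (disorder_cyl W \<zeta>) \<eta>)"
    by (intro Bochner_Integration.integrable_sum Bochner_Integration.integrable_mult_right integrable_real_indicator disorder_cyl_sets assms(1))
       (simp add: Pr.emeasure_eq_measure)
  then show ?thesis by (simp flip: local_eq_sum_cyl[OF assms])
qed

lemma integral_local:
  fixes f :: "('d site \<Rightarrow> 'f) \<Rightarrow> real"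
  assumes "finite W" "local_on W f"
  shows "(\<integral>\<eta>. f \<eta> \<partial>P) = (\<Sum>\<zeta>\<in>Pi\<^sub>E W (\<lambda>_. UNIV). f \<zeta> * measure P (disorder_cyl W \<zeta>))"
proof -
  have "(\<integral>\<eta>. f \<eta> \<partial>P) = (\<integral>\<eta>. (\<Sum>\<zeta>\<in>Pi\<^sub>E W (\<lambda>_. UNIV). f \<zeta> * indicator (disorder_cyl W \<zeta>) \<eta>) \<partial>P)"
    by (simp flip: local_eq_sum_cyl[OF assms])
  also have "\<dots> = (\<Sum>\<zeta>\<in>Pi\<^sub>E W (\<lambda>_. UNIV). f \<zeta> * measure P (disorder_cyl W \<zeta>))"
    by (subst Bochner_Integration.integral_sum)
       (auto intro!: Bochner_Integration.integrable_mult_right integrable_real_indicator disorder_cyl_sets assms(1)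
         simp: Pr.emeasure_eq_measure)
  finally show ?thesis .
qed

lemma measurable_component: "(\<lambda>\<eta>. \<eta> x) \<in> measurable P (measure_pmf p)"
  unfolding P_def by (rule measurable_component_singleton) simp

lemma measurable_shift: "(\<lambda>\<eta> y. \<eta> (c + y)) \<in> measurable P P"
  by (subst (2) P_def) (rule measurable_PiM_single'[OF measurable_component], simp add: space_PiM)

lemma distr_shift: "distr P P (\<lambda>\<eta> y. \<eta> (c + y)) = P"
proof -
  have "distr P P (\<lambda>\<eta> y. \<eta> (c + y)) = PiM UNIV (\<lambda>_. measure_pmf p)"
  proof (rule PP.PiM_eq)
    fix J :: "'d site set" and F assume J: "finite J"
    let ?E = "prod_emb UNIV (\<lambda>_. measure_pmf p) J (Pi\<^sub>E J F)"
    have "(\<lambda>\<eta> y. \<eta> (c + y)) -` ?E \<inter> space P = {\<eta> \<in> space P. \<forall>i\<in>(\<lambda>y. c + y) ` J. \<eta> i \<in> F (i - c)}"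
      by (auto simp: prod_emb_def PiE_iff space_PiM)
    moreover have "?E \<in> sets P" unfolding P_def by (rule sets_PiM_I) (auto simp: J)
    ultimately have "emeasure (distr P P (\<lambda>\<eta> y. \<eta> (c + y))) ?E
        = emeasure P {\<eta> \<in> space P. \<forall>i\<in>(\<lambda>y. c + y) ` J. \<eta> i \<in> F (i - c)}"
      by (simp add: emeasure_distr[OF measurable_shift])
    also have "\<dots> = (\<Prod>i\<in>(\<lambda>y. c + y) ` J. emeasure (measure_pmf p) (F (i - c)))"
      unfolding P_def by (subst PP.emeasure_PiM_Collect) (auto simp: J)
    also have "\<dots> = (\<Prod>j\<in>J. emeasure (measure_pmf p) (F j))"
      by (subst prod.reindex) (auto simp: inj_on_def)
    finally show "emeasure (distr P P (\<lambda>\<eta> y. \<eta> (c + y))) ?E = (\<Prod>j\<in>J. emeasure (measure_pmf p) (F j))" .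
  qed (simp add: P_def)
  then show ?thesis by (simp add: P_def)
qed

lemma integral_shift:
  fixes f :: "('d site \<Rightarrow> 'f) \<Rightarrow> real"
  assumes "f \<in> borel_measurable P"
  shows "(\<integral>\<eta>. f (\<lambda>y. \<eta> (c + y)) \<partial>P) = (\<integral>\<eta>. f \<eta> \<partial>P)"
  using integral_distr[OF measurable_shift assms, of c] by (simp add: distr_shift)

definition site_entropy :: real where
  "site_entropy = - (\<Sum>a\<in>UNIV. pmf p a * ln (pmf p a))"

lemma integral_ln_pmf_component: "(\<integral>\<eta>. ln (pmf p (\<eta> x)) \<partial>P) = - site_entropy"
proof -
  have "(\<integral>\<eta>. ln (pmf p (\<eta> x)) \<partial>P) = (\<integral>a. ln (pmf p a) \<partial>distr P (measure_pmf p) (\<lambda>\<eta>. \<eta> x))"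
    by (simp add: integral_distr[OF measurable_component])
  also have "distr P (measure_pmf p) (\<lambda>\<eta>. \<eta> x) = measure_pmf p"
    unfolding P_def by (rule PP.PiM_component) simp
  finally show ?thesis
    by (simp add: site_entropy_def integral_measure_pmf_real[where A=UNIV] mult.commute)
qed

lemma AE_pmf_pos: "finite B \<Longrightarrow> AE \<eta> in P. \<forall>x\<in>B. pmf p (\<eta> x) > 0"
  unfolding P_def by (intro AE_finite_allI PP.AE_component) (auto simp: AE_measure_pmf_iff pmf_positive)

lemma integral_ln_measure_disorder_cyl:
  assumes B: "finite B"
  shows "(\<integral>\<eta>. ln (measure P (disorder_cyl B \<eta>)) \<partial>P) = - real (card B) * site_entropy"
proof -
  have "AE \<eta> in P. ln (measure P (disorder_cyl B \<eta>)) = (\<Sum>x\<in>B. ln (pmf p (\<eta> x)))"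
    using AE_pmf_pos[OF B] by eventually_elim (auto simp: measure_disorder_cyl[OF B] B intro!: ln_prod)
  then have "(\<integral>\<eta>. ln (measure P (disorder_cyl B \<eta>)) \<partial>P) = (\<integral>\<eta>. (\<Sum>x\<in>B. ln (pmf p (\<eta> x))) \<partial>P)"
    by (intro integral_cong_AE borel_measurable_local[OF B] local_onI)
       (auto simp: measure_disorder_cyl[OF B] intro!: prod.cong)
  also have "\<dots> = (\<Sum>x\<in>B. \<integral>\<eta>. ln (pmf p (\<eta> x)) \<partial>P)"
  proof (rule Bochner_Integration.integral_sum)
    show "integrable P (\<lambda>\<eta>. ln (pmf p (\<eta> x)))" for x
      by (rule integrable_local[of "{x}"]) (auto intro: local_onI)
  qed
  finally show ?thesis by (simp add: integral_ln_pmf_component)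
qed

lemma ks_entropy_eq: "ks_entropy P = site_entropy"
proof -
  have "(\<Sum>\<zeta>\<in>Pi\<^sub>E (box n) (\<lambda>_. UNIV).
       measure P {\<eta> \<in> space P. \<forall>x\<in>box n. \<eta> x = \<zeta> x} * ln (measure P {\<eta> \<in> space P. \<forall>x\<in>box n. \<eta> x = \<zeta> x}))
      = - real (card (box n :: 'd site set)) * site_entropy" for n
  proof -
    have "local_on (box n) (\<lambda>\<eta>. ln (measure P (disorder_cyl (box n) \<eta>)))"
      by (rule local_onI) (simp add: measure_disorder_cyl)
    from integral_local[OF finite_box this] show ?thesis
      unfolding integral_ln_measure_disorder_cyl[OF finite_box] by (simp add: disorder_cyl_def mult.commute)
  qed
  then show ?thesis by (simp add: ks_entropy_def card_box_pos[THEN less_imp_neq, symmetric])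
qed

end

section \<open>Finite-volume joint measures and their weak limits\<close>

lemma space_conf_space [simp]: "space (conf_space :: ('d::finite site \<Rightarrow> 'a) measure) = UNIV"
  by (simp add: conf_space_def space_PiM)

lemma space_joint_space [simp]: "space (joint_space :: (('d::finite site \<Rightarrow> 'e) \<times> ('d site \<Rightarrow> 'f)) measure) = UNIV"
  by (simp add: joint_space_def space_pair_measure)

definition joint_cyl :: "'a set \<Rightarrow> ('a \<Rightarrow> 'e) \<times> ('a \<Rightarrow> 'f) \<Rightarrow> (('a \<Rightarrow> 'e) \<times> ('a \<Rightarrow> 'f)) set" where
  "joint_cyl B \<xi> = {\<xi>'. joint_agree B \<xi> \<xi>'}"

lemma joint_cyl_sets:
  fixes B :: "'d::finite site set" and \<xi> :: "('d site \<Rightarrow> 'e) \<times> ('d site \<Rightarrow> 'f)"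
  assumes "finite B"
  shows "joint_cyl B \<xi> \<in> sets joint_space"
  using assms
proof (induction B rule: finite_induct)
  case empty
  have "joint_cyl {} \<xi> = space joint_space" by (simp add: joint_cyl_def joint_agree_def)
  then show ?case by (simp only: sets.top)
next
  case (insert x B)
  have fst: "(\<lambda>\<xi>. fst \<xi> x) \<in> measurable (joint_space :: (('d site \<Rightarrow> 'e) \<times> ('d site \<Rightarrow> 'f)) measure) (count_space UNIV)"
    unfolding joint_space_def conf_space_def
    by (rule measurable_compose[OF measurable_fst measurable_component_singleton]) simp
  have snd: "(\<lambda>\<xi>. snd \<xi> x) \<in> measurable (joint_space :: (('d site \<Rightarrow> 'e) \<times> ('d site \<Rightarrow> 'f)) measure) (count_space UNIV)"
    unfolding joint_space_def conf_space_def
    by (rule measurable_compose[OF measurable_snd measurable_component_singleton]) simp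
  have "joint_cyl (insert x B) \<xi> = joint_cyl B \<xi> \<inter> ((\<lambda>\<xi>'. fst \<xi>' x) -` {fst \<xi> x} \<inter> space joint_space)
          \<inter> ((\<lambda>\<xi>'. snd \<xi>' x) -` {snd \<xi> x} \<inter> space joint_space)"
    by (auto simp: joint_cyl_def joint_agree_def)
  also have "\<dots> \<in> sets joint_space"
    by (intro sets.Int insert.IH measurable_sets[OF fst] measurable_sets[OF snd]) simp_all
  finally show ?case .
qed

lemma borel_measurable_joint_local:
  fixes f :: "(('d::finite site \<Rightarrow> 'e::finite) \<times> ('d site \<Rightarrow> 'f::finite)) \<Rightarrow> real"
  assumes W: "finite W" and loc: "\<And>\<xi> \<xi>'. joint_agree W \<xi> \<xi>' \<Longrightarrow> f \<xi> = f \<xi>'"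
  shows "f \<in> borel_measurable joint_space"
proof -
  let ?S = "Pi\<^sub>E W (\<lambda>_. UNIV :: 'e set) \<times> Pi\<^sub>E W (\<lambda>_. UNIV :: 'f set)"
  have fS: "finite ?S" using W by (intro finite_cartesian_product finite_PiE) auto
  have rep: "f \<xi> = (\<Sum>ab\<in>?S. f ab * indicator (joint_cyl W ab) \<xi>)" for \<xi>
  proof -
    let ?r = "(restrict (fst \<xi>) W, restrict (snd \<xi>) W)"
    have "(\<Sum>ab\<in>?S. f ab * indicator (joint_cyl W ab) \<xi>) = (\<Sum>ab\<in>?S. if ab = ?r then f ab else 0)"
    proof (rule sum.cong[OF refl])
      fix ab assume ab: "ab \<in> ?S"
      obtain a b where abe: "ab = (a, b)" by (cases ab)
      have "\<xi> \<in> joint_cyl W ab \<longleftrightarrow> ab = ?r"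
      proof
        assume "\<xi> \<in> joint_cyl W ab"
        then have "\<forall>x\<in>W. fst \<xi> x = a x \<and> snd \<xi> x = b x" by (auto simp: joint_cyl_def joint_agree_def abe)
        moreover have "a \<in> extensional W" "b \<in> extensional W" using ab abe by (auto simp: PiE_def)
        ultimately show "ab = ?r" unfolding abe by (auto simp: extensional_def fun_eq_iff)
      qed (auto simp: joint_cyl_def joint_agree_def)
      then show "f ab * indicator (joint_cyl W ab) \<xi> = (if ab = ?r then f ab else 0)"
        by (simp add: indicator_def)
    qed
    also have "\<dots> = f ?r" by (simp add: fS)
    also have "\<dots> = f \<xi>" by (rule loc) (auto simp: joint_agree_def)
    finally show ?thesis ..
  qed
  have "(\<lambda>\<xi>. \<Sum>ab\<in>?S. f ab * indicator (joint_cyl W ab) \<xi>) \<in> borel_measurable joint_space"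
    by (intro borel_measurable_sum borel_measurable_times borel_measurable_const
        borel_measurable_indicator joint_cyl_sets[OF W])
  then show ?thesis by (simp flip: rep)
qed

lemma eventually_subset_exhaustion:
  fixes \<Lambda> :: "nat \<Rightarrow> 'a set"
  assumes "finite B" "incseq \<Lambda>" "(\<Union>N. \<Lambda> N) = UNIV"
  shows "eventually (\<lambda>N. B \<subseteq> \<Lambda> N) sequentially"
  using assms(1)
proof (induction B rule: finite_induct)
  case (insert x B)
  obtain N1 where "x \<in> \<Lambda> N1" using assms(3) by blast
  then have "eventually (\<lambda>N. x \<in> \<Lambda> N) sequentially"
    using assms(2) by (auto simp: eventually_sequentially incseq_def)
  with insert.IH show ?case by eventually_elim simp
qed simp

context quenched_model
begin

lemma measurable_Pair_disorder: "(\<lambda>\<eta>. (\<sigma>, \<eta>)) \<in> measurable P (joint_space :: (('d site \<Rightarrow> 'e) \<times> ('d site \<Rightarrow> 'f)) measure)"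
proof -
  have "sets P = sets (conf_space :: ('d site \<Rightarrow> 'f) measure)"
    unfolding P_def conf_space_def by (rule sets_PiM_cong) simp_all
  then show ?thesis unfolding joint_space_def
    by (intro measurable_Pair[OF measurable_const measurable_ident_sets]) simp_all
qed

lemma pmf_gibbs:
  assumes fin: "finite \<Lambda>"
  shows "pmf (gibbs_pmf \<Phi> \<tau> \<Lambda> \<eta>) \<sigma> = (if \<sigma> \<in> bc_configs \<tau> \<Lambda> then exp (- H \<Lambda> \<sigma> \<eta>) / Z \<tau> \<Lambda> \<eta> else 0)"
  unfolding gibbs_pmf_def
proof (rule pmf_embed_pmf)
  have Z: "Z \<tau> \<Lambda> \<eta> > 0" by (rule partition_fn_pos[OF fin])
  then show "0 \<le> (if s \<in> bc_configs \<tau> \<Lambda> then exp (- H \<Lambda> s \<eta>) / Z \<tau> \<Lambda> \<eta> else 0)" for s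
    by simp
  have "(\<integral>\<^sup>+s. ennreal (if s \<in> bc_configs \<tau> \<Lambda> then exp (- H \<Lambda> s \<eta>) / Z \<tau> \<Lambda> \<eta> else 0) \<partial>count_space UNIV)
      = (\<Sum>s\<in>bc_configs \<tau> \<Lambda>. ennreal (if s \<in> bc_configs \<tau> \<Lambda> then exp (- H \<Lambda> s \<eta>) / Z \<tau> \<Lambda> \<eta> else 0))"
    by (rule nn_integral_count_space') (auto simp: finite_bc_configs[OF fin])
  also have "\<dots> = ennreal (\<Sum>s\<in>bc_configs \<tau> \<Lambda>. exp (- H \<Lambda> s \<eta>) / Z \<tau> \<Lambda> \<eta>)"
    using Z by (subst sum_ennreal[symmetric]) auto
  also have "(\<Sum>s\<in>bc_configs \<tau> \<Lambda>. exp (- H \<Lambda> s \<eta>) / Z \<tau> \<Lambda> \<eta>) = 1"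
    using Z by (simp add: sum_divide_distrib[symmetric] partition_fn_def)
  finally show "(\<integral>\<^sup>+s. ennreal (if s \<in> bc_configs \<tau> \<Lambda> then exp (- H \<Lambda> s \<eta>) / Z \<tau> \<Lambda> \<eta> else 0) \<partial>count_space UNIV) = 1"
    by simp
qed

lemma measure_gibbs_pmf:
  assumes fin: "finite \<Lambda>"
  shows "measure (gibbs_pmf \<Phi> \<tau> \<Lambda> \<eta>) S = (\<Sum>\<sigma>\<in>bc_configs \<tau> \<Lambda>. pmf (gibbs_pmf \<Phi> \<tau> \<Lambda> \<eta>) \<sigma> * indicator S \<sigma>)"
proof -
  let ?G = "gibbs_pmf \<Phi> \<tau> \<Lambda> \<eta>"
  have "set_pmf ?G \<subseteq> bc_configs \<tau> \<Lambda>"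
    by (auto simp: set_pmf_iff pmf_gibbs[OF fin] split: if_splits)
  then have "measure ?G S = measure ?G (S \<inter> bc_configs \<tau> \<Lambda>)"
    by (metis inf.absorb_iff2 inf_assoc measure_Int_set_pmf)
  also have "\<dots> = sum (pmf ?G) (bc_configs \<tau> \<Lambda> \<inter> S)"
    by (subst measure_measure_pmf_finite) (auto simp: finite_bc_configs[OF fin] Int_commute)
  also have "\<dots> = (\<Sum>\<sigma>\<in>bc_configs \<tau> \<Lambda>. pmf ?G \<sigma> * indicator S \<sigma>)"
    by (subst sum.inter_restrict[OF finite_bc_configs[OF fin]]) (auto intro!: sum.cong simp: indicator_def)
  finally show ?thesis .
qed

definition neighbourhood :: "'d site set \<Rightarrow> 'd site set" where
  "neighbourhood \<Lambda> = \<Union> (bonds_meeting \<Lambda>)"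

lemma finite_neighbourhood: "finite \<Lambda> \<Longrightarrow> finite (neighbourhood \<Lambda>)"
  unfolding neighbourhood_def using finite_bonds_meeting by (auto simp: bonds_meeting_def within_range_def)

lemma local_hamiltonian: "finite \<Lambda> \<Longrightarrow> local_on (neighbourhood \<Lambda>) (H \<Lambda> \<sigma>)"
proof (rule local_onI)
  fix \<eta> \<eta>' :: "'d site \<Rightarrow> 'f"
  assume fin: "finite \<Lambda>" and agree: "\<And>x. x \<in> neighbourhood \<Lambda> \<Longrightarrow> \<eta> x = \<eta>' x"
  show "H \<Lambda> \<sigma> \<eta> = H \<Lambda> \<sigma> \<eta>'" unfolding hamiltonian_eq_sum[OF fin]
  proof (rule sum.cong[OF refl], rule Phi_local)
    fix A x assume "A \<in> bonds_meeting \<Lambda>" "x \<in> A"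
    then show "\<sigma> x = \<sigma> x \<and> \<eta> x = \<eta>' x" using agree by (auto simp: neighbourhood_def)
  qed
qed

lemma local_partition_fn: "finite \<Lambda> \<Longrightarrow> local_on (neighbourhood \<Lambda>) (Z \<tau> \<Lambda>)"
proof (rule local_onI)
  fix \<eta> \<eta>' :: "'d site \<Rightarrow> 'f"
  assume "finite \<Lambda>" "\<And>x. x \<in> neighbourhood \<Lambda> \<Longrightarrow> \<eta> x = \<eta>' x"
  then have "H \<Lambda> s \<eta> = H \<Lambda> s \<eta>'" for s by (rule local_onD[OF local_hamiltonian])
  then show "Z \<tau> \<Lambda> \<eta> = Z \<tau> \<Lambda> \<eta>'" by (simp add: partition_fn_def)
qed

lemma local_ln_partition_fn: "finite \<Lambda> \<Longrightarrow> local_on (neighbourhood \<Lambda>) (\<lambda>\<eta>. ln (Z \<tau> \<Lambda> \<eta>))"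
  by (rule local_on_comp[OF local_partition_fn])

lemma integrable_ln_partition_fn: "finite \<Lambda> \<Longrightarrow> integrable P (\<lambda>\<eta>. ln (Z \<tau> \<Lambda> \<eta>))"
  by (rule integrable_local[OF finite_neighbourhood local_ln_partition_fn])

lemma local_pmf_gibbs: "finite \<Lambda> \<Longrightarrow> local_on (neighbourhood \<Lambda>) (\<lambda>\<eta>. pmf (gibbs_pmf \<Phi> \<tau> \<Lambda> \<eta>) \<sigma>)"
proof (rule local_onI)
  fix \<eta> \<eta>' :: "'d site \<Rightarrow> 'f"
  assume "finite \<Lambda>" "\<And>x. x \<in> neighbourhood \<Lambda> \<Longrightarrow> \<eta> x = \<eta>' x"
  then have "H \<Lambda> \<sigma> \<eta> = H \<Lambda> \<sigma> \<eta>'" "Z \<tau> \<Lambda> \<eta> = Z \<tau> \<Lambda> \<eta>'"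
    by (auto intro: local_onD[OF local_hamiltonian] local_onD[OF local_partition_fn])
  then show "pmf (gibbs_pmf \<Phi> \<tau> \<Lambda> \<eta>) \<sigma> = pmf (gibbs_pmf \<Phi> \<tau> \<Lambda> \<eta>') \<sigma>"
    using \<open>finite \<Lambda>\<close> by (simp add: pmf_gibbs)
qed

definition gibbs_kernel :: "('d site \<Rightarrow> 'e) \<Rightarrow> 'd site set \<Rightarrow> ('d site \<Rightarrow> 'f) \<Rightarrow> (('d site \<Rightarrow> 'e) \<times> ('d site \<Rightarrow> 'f)) measure" where
  "gibbs_kernel \<tau> \<Lambda> \<eta> = distr (measure_pmf (gibbs_pmf \<Phi> \<tau> \<Lambda> \<eta>)) joint_space (\<lambda>\<sigma>. (\<sigma>, \<eta>))"

lemma fv_joint_eq_bind: "fv_joint P \<Phi> \<tau> \<Lambda> = P \<bind> gibbs_kernel \<tau> \<Lambda>"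
  by (simp add: fv_joint_def gibbs_kernel_def[abs_def])

lemma prob_space_gibbs_kernel: "prob_space (gibbs_kernel \<tau> \<Lambda> \<eta>)"
  unfolding gibbs_kernel_def by (rule prob_space.prob_space_distr) (simp_all add: prob_space_measure_pmf)

lemma measure_gibbs_kernel:
  assumes fin: "finite \<Lambda>" and A: "A \<in> sets joint_space"
  shows "measure (gibbs_kernel \<tau> \<Lambda> \<eta>) A = (\<Sum>\<sigma>\<in>bc_configs \<tau> \<Lambda>. pmf (gibbs_pmf \<Phi> \<tau> \<Lambda> \<eta>) \<sigma> * indicator A (\<sigma>, \<eta>))"
  unfolding gibbs_kernel_def using A by (simp add: measure_distr measure_gibbs_pmf[OF fin] indicator_def)

lemma measurable_gibbs_kernel:
  assumes fin: "finite \<Lambda>"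
  shows "gibbs_kernel \<tau> \<Lambda> \<in> measurable P (subprob_algebra joint_space)"
proof (rule measurable_subprob_algebra)
  show "subprob_space (gibbs_kernel \<tau> \<Lambda> \<eta>)" for \<eta>
    using prob_space_gibbs_kernel prob_space_imp_subprob_space by blast
  show "sets (gibbs_kernel \<tau> \<Lambda> \<eta>) = sets joint_space" for \<eta>
    by (simp add: gibbs_kernel_def)
  fix A :: "(('d site \<Rightarrow> 'e) \<times> ('d site \<Rightarrow> 'f)) set" assume A: "A \<in> sets joint_space"
  have "(\<lambda>\<eta>. \<Sum>\<sigma>\<in>bc_configs \<tau> \<Lambda>. pmf (gibbs_pmf \<Phi> \<tau> \<Lambda> \<eta>) \<sigma> * indicator A (\<sigma>, \<eta>)) \<in> borel_measurable P"
  proof (rule borel_measurable_sum, rule borel_measurable_times)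
    fix \<sigma>
    show "(\<lambda>\<eta>. pmf (gibbs_pmf \<Phi> \<tau> \<Lambda> \<eta>) \<sigma>) \<in> borel_measurable P"
      by (rule borel_measurable_local[OF finite_neighbourhood[OF fin] local_pmf_gibbs[OF fin]])
    show "(\<lambda>\<eta>. indicator A (\<sigma>, \<eta>) :: real) \<in> borel_measurable P"
      by (rule measurable_compose[OF measurable_Pair_disorder borel_measurable_indicator[OF A]])
  qed
  then show "(\<lambda>\<eta>. emeasure (gibbs_kernel \<tau> \<Lambda> \<eta>) A) \<in> borel_measurable P"
    by (simp add: finite_measure.emeasure_eq_measure[OF prob_space.finite_measure[OF prob_space_gibbs_kernel]]
        measure_gibbs_kernel[OF fin A])
qed

lemma sets_fv_joint: "sets (fv_joint P \<Phi> \<tau> \<Lambda>) = sets joint_space"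
  unfolding fv_joint_eq_bind by (rule sets_bind) (simp_all add: gibbs_kernel_def)

lemma local_cyl_weight: "finite \<Lambda> \<Longrightarrow> local_on (neighbourhood \<Lambda>) (cyl_weight \<tau> \<Lambda> B \<sigma>q)"
proof (rule local_onI)
  fix \<eta> \<eta>' :: "'d site \<Rightarrow> 'f"
  assume "finite \<Lambda>" "\<And>x. x \<in> neighbourhood \<Lambda> \<Longrightarrow> \<eta> x = \<eta>' x"
  then have "H \<Lambda> s \<eta> = H \<Lambda> s \<eta>'" for s by (rule local_onD[OF local_hamiltonian])
  then show "cyl_weight \<tau> \<Lambda> B \<sigma>q \<eta> = cyl_weight \<tau> \<Lambda> B \<sigma>q \<eta>'"
    by (simp add: cyl_weight_def cong: if_cong)
qed

definition local_weight :: "('d site \<Rightarrow> 'e) \<Rightarrow> 'd site set \<Rightarrow> ('d site \<Rightarrow> 'e) \<Rightarrow> ('d site \<Rightarrow> 'f) \<Rightarrow> real" where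
  "local_weight \<tau> B \<sigma>q \<eta> = exp (- H B \<sigma>q \<eta>) / Z \<tau> B \<eta>"

lemma local_weight_pos: "finite B \<Longrightarrow> local_weight \<tau> B \<sigma>q \<eta> > 0"
  unfolding local_weight_def using partition_fn_pos by simp

lemma measure_gibbs_kernel_joint_cyl:
  assumes fin: "finite \<Lambda>" and fB: "finite B"
  shows "measure (gibbs_kernel \<tau> \<Lambda> \<eta>) (joint_cyl B (\<sigma>q, \<eta>q))
       = indicator (disorder_cyl B \<eta>q) \<eta> * (cyl_weight \<tau> \<Lambda> B \<sigma>q \<eta> / Z \<tau> \<Lambda> \<eta>)"
proof -
  have "indicator (joint_cyl B (\<sigma>q, \<eta>q)) (\<sigma>, \<eta>)
      = indicator (disorder_cyl B \<eta>q) \<eta> * (if \<forall>x\<in>B. \<sigma> x = \<sigma>q x then 1 else 0 :: real)" for \<sigma>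
    by (auto simp: indicator_def joint_cyl_def joint_agree_def disorder_cyl_def)
  then have "measure (gibbs_kernel \<tau> \<Lambda> \<eta>) (joint_cyl B (\<sigma>q, \<eta>q)) = indicator (disorder_cyl B \<eta>q) \<eta> *
      (\<Sum>\<sigma>\<in>bc_configs \<tau> \<Lambda>. (if \<forall>x\<in>B. \<sigma> x = \<sigma>q x then exp (- H \<Lambda> \<sigma> \<eta>) else 0) / Z \<tau> \<Lambda> \<eta>)"
    unfolding measure_gibbs_kernel[OF fin joint_cyl_sets[OF fB]] sum_distrib_left
    by (intro sum.cong refl) (simp add: pmf_gibbs[OF fin])
  then show ?thesis by (simp add: cyl_weight_def sum_divide_distrib)
qed

text \<open>Replacing \<open>\<eta>\<close> by \<open>\<eta>q\<close>, which agrees with it on \<open>B\<close>, changes \<open>local_weight\<close> only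
  through the boundary bonds of \<open>B\<close>.\<close>

lemma gibbs_cyl_prob_close:
  assumes fin: "finite \<Lambda>" and B: "B \<subseteq> \<Lambda>" and agree: "\<And>x. x \<in> B \<Longrightarrow> \<eta> x = \<eta>q x"
  shows "mult_close (4 * boundary_cost B) (cyl_weight \<tau> \<Lambda> B \<sigma>q \<eta> / Z \<tau> \<Lambda> \<eta>) (local_weight \<tau> B \<sigma>q \<eta>q)"
proof -
  have fB: "finite B" using B fin by (rule finite_subset)
  have "mult_close (boundary_cost B + boundary_cost B) (local_weight \<tau> B \<sigma>q \<eta>) (local_weight \<tau> B \<sigma>q \<eta>q)"
    unfolding local_weight_def
    by (intro mult_close_divide mult_close_exp partition_fn_mult_close partition_fn_pos fB)
       (use hamiltonian_local_change[OF fB, where \<sigma>=\<sigma>q and \<sigma>'=\<sigma>q and \<eta>=\<eta>q and \<eta>'=\<eta>] agree in simp_all)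
  from mult_close_trans[OF cyl_weight_ratio[OF fin B, folded local_weight_def] this] show ?thesis
    by simp
qed

lemma fv_joint_cyl_close:
  assumes fin: "finite \<Lambda>" and B: "B \<subseteq> \<Lambda>"
  shows "mult_close (4 * boundary_cost B) (measure (fv_joint P \<Phi> \<tau> \<Lambda>) (joint_cyl B (\<sigma>q, \<eta>q)))
           (local_weight \<tau> B \<sigma>q \<eta>q * measure P (disorder_cyl B \<eta>q))"
proof -
  have fB: "finite B" using B fin by (rule finite_subset)
  define f where "f \<eta> = indicator (disorder_cyl B \<eta>q) \<eta> * (cyl_weight \<tau> \<Lambda> B \<sigma>q \<eta> / Z \<tau> \<Lambda> \<eta>)" for \<eta>
  define g where "g \<eta> = local_weight \<tau> B \<sigma>q \<eta>q * indicator (disorder_cyl B \<eta>q) \<eta>" for \<eta>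
  have "local_on (neighbourhood \<Lambda> \<union> B) f"
  proof (rule local_onI)
    fix \<eta> \<eta>' :: "'d site \<Rightarrow> 'f" assume agree: "\<And>x. x \<in> neighbourhood \<Lambda> \<union> B \<Longrightarrow> \<eta> x = \<eta>' x"
    then have "cyl_weight \<tau> \<Lambda> B \<sigma>q \<eta> = cyl_weight \<tau> \<Lambda> B \<sigma>q \<eta>'" "Z \<tau> \<Lambda> \<eta> = Z \<tau> \<Lambda> \<eta>'"
      by (auto intro: local_onD[OF local_cyl_weight[OF fin]] local_onD[OF local_partition_fn[OF fin]])
    moreover have "\<eta> \<in> disorder_cyl B \<eta>q \<longleftrightarrow> \<eta>' \<in> disorder_cyl B \<eta>q" using agree by (auto simp: disorder_cyl_def)
    ultimately show "f \<eta> = f \<eta>'" by (simp add: f_def indicator_def)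
  qed
  then have "integrable P f" by (rule integrable_local[rotated]) (simp add: fin fB finite_neighbourhood)
  moreover have "integrable P g"
    unfolding g_def by (intro integrable_local[of B] local_onI) (auto simp: fB disorder_cyl_def indicator_def)
  moreover have "mult_close (4 * boundary_cost B) (f \<eta>) (g \<eta>)" for \<eta>
  proof (cases "\<eta> \<in> disorder_cyl B \<eta>q")
    case True
    then show ?thesis
      using gibbs_cyl_prob_close[OF fin B, of \<eta> \<eta>q \<tau> \<sigma>q] by (simp add: f_def g_def disorder_cyl_def)
  qed (simp add: f_def g_def mult_close_def)
  ultimately have "mult_close (4 * boundary_cost B) (\<integral>\<eta>. f \<eta> \<partial>P) (\<integral>\<eta>. g \<eta> \<partial>P)"
    by (intro Pr.mult_close_integral) auto
  moreover have "measure (fv_joint P \<Phi> \<tau> \<Lambda>) (joint_cyl B (\<sigma>q, \<eta>q)) = (\<integral>\<eta>. f \<eta> \<partial>P)"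
    unfolding fv_joint_eq_bind f_def
    by (simp add: Pr.measure_bind[OF measurable_gibbs_kernel[OF fin] joint_cyl_sets[OF fB]]
        measure_gibbs_kernel_joint_cyl[OF fin fB])
  moreover have "(\<integral>\<eta>. g \<eta> \<partial>P) = local_weight \<tau> B \<sigma>q \<eta>q * measure P (disorder_cyl B \<eta>q)"
    by (simp add: g_def disorder_cyl_sets[OF fB])
  ultimately show ?thesis by simp
qed

text \<open>The bounds survive the weak limit because the indicator of a finite-dimensional cylinder is
  continuous for the product topology.\<close>

lemma joint_measure_cyl_close:
  assumes K: "is_joint_measure P \<Phi> \<tau> K" and fB: "finite B"
  shows "mult_close (4 * boundary_cost B) (cyl_prob K B (\<sigma>q, \<eta>q))
           (local_weight \<tau> B \<sigma>q \<eta>q * measure P (disorder_cyl B \<eta>q))"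
proof -
  obtain \<Lambda> :: "nat \<Rightarrow> 'd site set" where fin: "\<And>N. finite (\<Lambda> N)" and "incseq \<Lambda>" "(\<Union>N. \<Lambda> N) = UNIV"
    and lim: "weak_conv (\<lambda>N. fv_joint P \<Phi> \<tau> (\<Lambda> N)) K" and sK: "sets K = sets joint_space"
    using K unfolding is_joint_measure_def by blast
  let ?g = "indicator (joint_cyl B (\<sigma>q, \<eta>q)) :: ('d site \<Rightarrow> 'e) \<times> ('d site \<Rightarrow> 'f) \<Rightarrow> real"
  have "joint_continuous ?g"
    unfolding joint_continuous_def
  proof (intro allI impI exI conjI)
    fix \<xi> \<xi>' :: "('d site \<Rightarrow> 'e) \<times> ('d site \<Rightarrow> 'f)" and \<epsilon> :: real
    assume "\<epsilon> > 0" "joint_agree B \<xi> \<xi>'"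
    then show "\<bar>?g \<xi>' - ?g \<xi>\<bar> < \<epsilon>" by (auto simp: indicator_def joint_cyl_def joint_agree_def)
  qed (rule fB)
  then have "(\<lambda>N. \<integral>\<xi>. ?g \<xi> \<partial>fv_joint P \<Phi> \<tau> (\<Lambda> N)) \<longlonglongrightarrow> (\<integral>\<xi>. ?g \<xi> \<partial>K)"
    using lim unfolding weak_conv_def by blast
  moreover have "(\<integral>\<xi>. ?g \<xi> \<partial>fv_joint P \<Phi> \<tau> (\<Lambda> N)) = measure (fv_joint P \<Phi> \<tau> (\<Lambda> N)) (joint_cyl B (\<sigma>q, \<eta>q))" for N
    using sets_eq_imp_space_eq[OF sets_fv_joint, of \<tau> "\<Lambda> N"] by simp
  moreover have "(\<integral>\<xi>. ?g \<xi> \<partial>K) = cyl_prob K B (\<sigma>q, \<eta>q)"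
    using sets_eq_imp_space_eq[OF sK] by (simp add: cyl_prob_def joint_cyl_def)
  ultimately have "(\<lambda>N. measure (fv_joint P \<Phi> \<tau> (\<Lambda> N)) (joint_cyl B (\<sigma>q, \<eta>q))) \<longlonglongrightarrow> cyl_prob K B (\<sigma>q, \<eta>q)"
    by simp
  moreover have "eventually (\<lambda>N. B \<subseteq> \<Lambda> N) sequentially"
    by (rule eventually_subset_exhaustion) fact+
  then have "eventually (\<lambda>N. mult_close (4 * boundary_cost B) (measure (fv_joint P \<Phi> \<tau> (\<Lambda> N)) (joint_cyl B (\<sigma>q, \<eta>q)))
      (local_weight \<tau> B \<sigma>q \<eta>q * measure P (disorder_cyl B \<eta>q))) sequentially"
    by eventually_elim (rule fv_joint_cyl_close[OF fin])
  ultimately show ?thesis by (rule mult_close_LIMSEQ)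
qed

section \<open>The mean energy density\<close>

lemma local_Phi: "local_on A (\<Phi> A \<sigma>)"
  by (rule local_onI) (rule Phi_local, simp)

definition mean_Phi :: "('d site \<Rightarrow> 'e) \<Rightarrow> 'd site set \<Rightarrow> real" where
  "mean_Phi \<sigma> A = (\<integral>\<eta>. \<Phi> A \<sigma> \<eta> \<partial>P)"

lemma abs_mean_Phi_le: "finite A \<Longrightarrow> \<bar>mean_Phi \<sigma> A\<bar> \<le> pot_bound"
  using Pr.abs_integral_diff_le[OF integrable_local[OF _ local_Phi] integrable_zero, of A \<sigma> pot_bound]
  by (simp add: mean_Phi_def abs_Phi_le_pot_bound)

lemma mean_Phi_translate:
  assumes inv: "\<forall>x y. \<sigma>0 (x + y) = \<sigma>0 y" and "finite A"
  shows "mean_Phi \<sigma>0 ((\<lambda>y. x + y) ` A) = mean_Phi \<sigma>0 A"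
proof -
  have "(\<lambda>y. \<sigma>0 (x + y)) = \<sigma>0" using inv by auto
  then show ?thesis unfolding mean_Phi_def Phi_shift
    by (simp add: integral_shift[where f="\<Phi> A \<sigma>0"] borel_measurable_local[OF assms(2) local_Phi])
qed

definition bonds_at_origin :: "'d site set set" where
  "bonds_at_origin = {A. within_range A \<and> 0 \<in> A}"

lemma finite_bonds_at_origin: "finite bonds_at_origin"
  by (rule finite_subset[of _ "Pow (cube interaction_range 0)"])
     (auto simp: bonds_at_origin_def dest: within_range_subset_cube)

definition energy_density :: "('d site \<Rightarrow> 'e) \<Rightarrow> real" where
  "energy_density \<sigma> = (\<Sum>A\<in>bonds_at_origin. mean_Phi \<sigma> A / real (card A))"

lemma infsum_eq_energy_density:
  "infsum (\<lambda>A. (\<integral>\<eta>. \<Phi> A \<sigma> \<eta> \<partial>P) / real (card A)) {A. finite A \<and> 0 \<in> A} = energy_density \<sigma>"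
proof -
  have "infsum (\<lambda>A. (\<integral>\<eta>. \<Phi> A \<sigma> \<eta> \<partial>P) / real (card A)) {A. finite A \<and> 0 \<in> A}
      = infsum (\<lambda>A. mean_Phi \<sigma> A / real (card A)) bonds_at_origin"
  proof (rule infsum_cong_neutral)
    fix A assume "A \<in> {A. finite A \<and> 0 \<in> A} - bonds_at_origin"
    then have "\<Phi> A \<sigma> = (\<lambda>\<eta>. 0)" by (auto simp: bonds_at_origin_def Phi_eq_0)
    then show "(\<integral>\<eta>. \<Phi> A \<sigma> \<eta> \<partial>P) / real (card A) = 0" by simp
  qed (auto simp: bonds_at_origin_def mean_Phi_def within_range_finite)
  then show ?thesis by (simp add: energy_density_def finite_bonds_at_origin)
qed

lemma bonds_containing_eq:
  assumes "x \<in> B"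
  shows "{A \<in> bonds_meeting B. x \<in> A} = (\<lambda>A. (\<lambda>y. x + y) ` A) ` bonds_at_origin"
proof (intro equalityI subsetI)
  fix A assume A: "A \<in> {A \<in> bonds_meeting B. x \<in> A}"
  have "A = (\<lambda>y. x + y) ` ((\<lambda>y. - x + y) ` A)" by (auto simp: image_image)
  moreover have "(\<lambda>y. - x + y) ` A \<in> bonds_at_origin"
    using A within_range_shift[of "- x" A] by (force simp: bonds_meeting_def bonds_at_origin_def)
  ultimately show "A \<in> (\<lambda>A. (\<lambda>y. x + y) ` A) ` bonds_at_origin" by blast
qed (use assms in \<open>force simp: bonds_meeting_def bonds_at_origin_def within_range_shift\<close>)

text \<open>Share the mean energy of each bond equally among its sites. For translation invariant \<open>\<sigma>0\<close>
  every site of \<open>B\<close> receives \<open>energy_density \<sigma>0\<close>; the shares of sites outside \<open>B\<close> are carried by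
  boundary bonds.\<close>

lemma sum_shares_inside:
  assumes inv: "\<forall>x y. \<sigma>0 (x + y) = \<sigma>0 y" and fB: "finite B"
  shows "(\<Sum>A\<in>bonds_meeting B. \<Sum>x\<in>A \<inter> B. mean_Phi \<sigma>0 A / real (card A)) = real (card B) * energy_density \<sigma>0"
proof -
  have "(\<Sum>A\<in>bonds_meeting B. \<Sum>x\<in>A \<inter> B. mean_Phi \<sigma>0 A / real (card A))
      = (\<Sum>x\<in>B. \<Sum>A\<in>{A \<in> bonds_meeting B. x \<in> A}. mean_Phi \<sigma>0 A / real (card A))"
    using sum.swap_restrict[OF finite_bonds_meeting[OF fB] fB, of "\<lambda>A x. mean_Phi \<sigma>0 A / real (card A)" "\<lambda>A x. x \<in> A"]
    by (simp add: Int_def conj_commute)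
  also have "\<dots> = (\<Sum>x\<in>B. energy_density \<sigma>0)"
  proof (rule sum.cong[OF refl])
    fix x assume "x \<in> B"
    have "(\<Sum>A\<in>{A \<in> bonds_meeting B. x \<in> A}. mean_Phi \<sigma>0 A / real (card A))
        = (\<Sum>A\<in>bonds_at_origin. mean_Phi \<sigma>0 ((\<lambda>y. x + y) ` A) / real (card ((\<lambda>y. x + y) ` A)))"
      unfolding bonds_containing_eq[OF \<open>x \<in> B\<close>] by (rule sum.reindex[OF inj_on_translate_image, unfolded comp_def])
    also have "\<dots> = energy_density \<sigma>0"
      unfolding energy_density_def
      by (intro sum.cong refl) (simp add: mean_Phi_translate[OF inv] card_image bonds_at_origin_def within_range_finite)
    finally show "(\<Sum>A\<in>{A \<in> bonds_meeting B. x \<in> A}. mean_Phi \<sigma>0 A / real (card A)) = energy_density \<sigma>0" .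
  qed
  finally show ?thesis by simp
qed

lemma abs_sum_shares_outside_le:
  assumes fB: "finite B"
  shows "\<bar>\<Sum>A\<in>bonds_meeting B. \<Sum>x\<in>A - B. mean_Phi \<sigma> A / real (card A)\<bar> \<le> boundary_cost B"
proof -
  have "(\<Sum>A\<in>bonds_meeting B. \<Sum>x\<in>A - B. mean_Phi \<sigma> A / real (card A))
      = (\<Sum>A\<in>boundary_bonds B. \<Sum>x\<in>A - B. mean_Phi \<sigma> A / real (card A))"
  proof (rule sum.mono_neutral_right[OF finite_bonds_meeting[OF fB]])
    show "\<forall>A\<in>bonds_meeting B - boundary_bonds B. (\<Sum>x\<in>A - B. mean_Phi \<sigma> A / real (card A)) = 0"
    proof
      fix A assume "A \<in> bonds_meeting B - boundary_bonds B"
      then have "A - B = {}" by (auto simp: boundary_bonds_def)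
      then show "(\<Sum>x\<in>A - B. mean_Phi \<sigma> A / real (card A)) = 0" by (simp only: sum.empty)
    qed
  qed (auto simp: boundary_bonds_def)
  also have "\<bar>\<dots>\<bar> \<le> (\<Sum>A\<in>boundary_bonds B. pot_bound)"
  proof (rule order_trans[OF sum_abs sum_mono])
    fix A assume "A \<in> boundary_bonds B"
    then have A: "finite A" "A \<noteq> {}" by (auto simp: boundary_bonds_def bonds_meeting_def within_range_def)
    have "\<bar>\<Sum>x\<in>A - B. mean_Phi \<sigma> A / real (card A)\<bar> = real (card (A - B)) * (\<bar>mean_Phi \<sigma> A\<bar> / real (card A))"
      by (simp add: abs_mult)
    also have "\<dots> \<le> real (card A) * (\<bar>mean_Phi \<sigma> A\<bar> / real (card A))"
      using A by (intro mult_right_mono) (simp_all add: card_mono)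
    also have "\<dots> \<le> pot_bound"
      using abs_mean_Phi_le[OF A(1)] A by simp
    finally show "\<bar>\<Sum>x\<in>A - B. mean_Phi \<sigma> A / real (card A)\<bar> \<le> pot_bound" .
  qed
  also have "\<dots> \<le> boundary_cost B" using pot_bound_nonneg by (simp add: boundary_cost_def)
  finally show ?thesis .
qed

lemma abs_integral_hamiltonian_approx:
  assumes inv: "\<forall>x y. \<sigma>0 (x + y) = \<sigma>0 y" and fB: "finite B"
  shows "\<bar>(\<integral>\<eta>. H B \<sigma>0 \<eta> \<partial>P) - real (card B) * energy_density \<sigma>0\<bar> \<le> boundary_cost B"
proof -
  have bond: "finite A" "A \<noteq> {}" if "A \<in> bonds_meeting B" for A
    using that by (auto simp: bonds_meeting_def within_range_def)
  have "(\<integral>\<eta>. H B \<sigma>0 \<eta> \<partial>P) = (\<Sum>A\<in>bonds_meeting B. mean_Phi \<sigma>0 A)"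
    unfolding hamiltonian_eq_sum[OF fB] mean_Phi_def
    by (rule Bochner_Integration.integral_sum) (rule integrable_local[OF _ local_Phi], use bond in blast)
  also have "\<dots> = (\<Sum>A\<in>bonds_meeting B. \<Sum>x\<in>A \<inter> B. mean_Phi \<sigma>0 A / real (card A))
      + (\<Sum>A\<in>bonds_meeting B. \<Sum>x\<in>A - B. mean_Phi \<sigma>0 A / real (card A))"
    unfolding sum.distrib[symmetric]
  proof (intro sum.cong refl)
    fix A assume "A \<in> bonds_meeting B"
    then have "mean_Phi \<sigma>0 A = (\<Sum>x\<in>A. mean_Phi \<sigma>0 A / real (card A))" using bond by simp
    also have "\<dots> = (\<Sum>x\<in>A \<inter> B. mean_Phi \<sigma>0 A / real (card A)) + (\<Sum>x\<in>A - B. mean_Phi \<sigma>0 A / real (card A))"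
      by (rule sum.Int_Diff) (use bond \<open>A \<in> bonds_meeting B\<close> in blast)
    finally show "mean_Phi \<sigma>0 A = \<dots>" .
  qed
  finally show ?thesis
    using sum_shares_inside[OF inv fB] abs_sum_shares_outside_le[OF fB, of \<sigma>0] by simp
qed

section \<open>Cylinder entropies of a joint measure\<close>

lemma cyl_prob_joint_agree: "joint_agree B \<xi> \<xi>' \<Longrightarrow> cyl_prob K B \<xi> = cyl_prob K B \<xi>'"
  unfolding cyl_prob_def by (rule arg_cong[where f="measure K"]) (auto simp: joint_agree_def)

lemma e_seq_eq_integral:
  fixes \<sigma> :: "'d site \<Rightarrow> 'e"
  shows "e_seq K (distr P joint_space (\<lambda>\<eta>. (\<sigma>, \<eta>))) n
     = - (\<integral>\<eta>. ln (cyl_prob K (box n) (\<sigma>, \<eta>)) \<partial>P) / real (card (box n :: 'd site set))"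
proof -
  have "(\<lambda>\<xi>. ln (cyl_prob K (box n) \<xi>)) \<in> borel_measurable joint_space"
    by (rule borel_measurable_joint_local[OF finite_box[of n]]) (simp add: cyl_prob_joint_agree[of _ _ _ K])
  then show ?thesis
    unfolding e_seq_def by (simp add: integral_distr[OF measurable_Pair_disorder])
qed

lemma abs_ln_cyl_prob_approx:
  assumes K: "is_joint_measure P \<Phi> \<tau> K" and fB: "finite B"
  shows "AE \<eta> in P. \<bar>ln (cyl_prob K B (\<sigma>, \<eta>))
           - (ln (measure P (disorder_cyl B \<eta>)) - H B \<sigma> \<eta> - ln (Z \<tau> B \<eta>))\<bar> \<le> 4 * boundary_cost B"
  using AE_pmf_pos[OF fB]
proof eventually_elim
  case (elim \<eta>)
  have m: "measure P (disorder_cyl B \<eta>) > 0"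
    using elim by (simp add: measure_disorder_cyl[OF fB] prod_pos)
  have w: "local_weight \<tau> B \<sigma> \<eta> > 0" by (rule local_weight_pos[OF fB])
  have "\<bar>ln (local_weight \<tau> B \<sigma> \<eta> * measure P (disorder_cyl B \<eta>)) - ln (cyl_prob K B (\<sigma>, \<eta>))\<bar> \<le> 4 * boundary_cost B"
    by (rule abs_ln_diff_le_if_mult_close[OF mult_close_sym[OF joint_measure_cyl_close[OF K fB]]])
       (use m w in simp)
  moreover have "ln (local_weight \<tau> B \<sigma> \<eta> * measure P (disorder_cyl B \<eta>))
      = ln (measure P (disorder_cyl B \<eta>)) - H B \<sigma> \<eta> - ln (Z \<tau> B \<eta>)"
    using m partition_fn_pos[OF fB, of \<tau> \<eta>] by (simp add: local_weight_def ln_mult_pos ln_div)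
  ultimately show ?case by (simp add: abs_minus_commute)
qed

lemma abs_integral_ln_cyl_prob_approx:
  assumes K: "is_joint_measure P \<Phi> \<tau> K" and fB: "finite B"
  shows "\<bar>(\<integral>\<eta>. ln (cyl_prob K B (\<sigma>, \<eta>)) \<partial>P)
           - (- real (card B) * site_entropy - (\<integral>\<eta>. H B \<sigma> \<eta> \<partial>P) - (\<integral>\<eta>. ln (Z \<tau> B \<eta>) \<partial>P))\<bar>
         \<le> 4 * boundary_cost B"
proof -
  have int_cyl: "integrable P (\<lambda>\<eta>. ln (cyl_prob K B (\<sigma>, \<eta>)))"
    by (intro integrable_local[OF fB] local_onI arg_cong[where f=ln] cyl_prob_joint_agree)
       (simp add: joint_agree_def)
  have int_P: "integrable P (\<lambda>\<eta>. ln (measure P (disorder_cyl B \<eta>)))"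
    by (intro integrable_local[OF fB] local_onI) (simp add: measure_disorder_cyl[OF fB])
  have int_H: "integrable P (H B \<sigma>)"
    by (rule integrable_local[OF finite_neighbourhood[OF fB] local_hamiltonian[OF fB]])
  have "\<bar>(\<integral>\<eta>. ln (cyl_prob K B (\<sigma>, \<eta>)) \<partial>P)
      - (\<integral>\<eta>. ln (measure P (disorder_cyl B \<eta>)) - H B \<sigma> \<eta> - ln (Z \<tau> B \<eta>) \<partial>P)\<bar> \<le> 4 * boundary_cost B"
    using int_cyl int_P int_H integrable_ln_partition_fn[OF fB]
    by (intro Pr.abs_integral_diff_le abs_ln_cyl_prob_approx[OF K fB]) auto
  then show ?thesis
    using int_P int_H integrable_ln_partition_fn[OF fB, of \<tau>]
    by (simp add: integral_ln_measure_disorder_cyl[OF fB])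
qed

lemma abs_e_seq_approx:
  fixes n :: nat
  assumes K: "is_joint_measure P \<Phi> \<tau> K"
  defines "V \<equiv> real (card (box n :: 'd site set))"
  shows "\<bar>e_seq K (distr P joint_space (\<lambda>\<eta>. (\<sigma>, \<eta>))) n
          - (site_entropy + (\<integral>\<eta>. H (box n) \<sigma> \<eta> \<partial>P) / V + (\<integral>\<eta>. ln (Z \<tau> (box n) \<eta>) \<partial>P) / V)\<bar>
         \<le> 4 * (boundary_cost (box n) / V)"
proof -
  have V: "V > 0" unfolding V_def using card_box_pos by simp
  have "e_seq K (distr P joint_space (\<lambda>\<eta>. (\<sigma>, \<eta>))) n
          - (site_entropy + (\<integral>\<eta>. H (box n) \<sigma> \<eta> \<partial>P) / V + (\<integral>\<eta>. ln (Z \<tau> (box n) \<eta>) \<partial>P) / V)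
      = - ((\<integral>\<eta>. ln (cyl_prob K (box n) (\<sigma>, \<eta>)) \<partial>P) - (- V * site_entropy - (\<integral>\<eta>. H (box n) \<sigma> \<eta> \<partial>P)
          - (\<integral>\<eta>. ln (Z \<tau> (box n) \<eta>) \<partial>P))) / V"
    using V unfolding e_seq_eq_integral V_def[symmetric] by (simp add: field_simps)
  also have "\<bar>\<dots>\<bar> \<le> 4 * boundary_cost (box n) / V"
    using abs_integral_ln_cyl_prob_approx[OF K finite_box, of n \<sigma>] V
    by (simp add: abs_divide divide_right_mono V_def)
  finally show ?thesis by simp
qed

end

section \<open>Almost sure convergence of the quenched pressure\<close>

lemma abs_ratio_approx:
  fixes z I v V r a d C :: real
  assumes V: "V = I * v + r" and Vpos: "V > 0" and v: "v > 0" and r: "r \<ge> 0"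
    and z: "\<bar>z - I * a\<bar> \<le> I * d + r * C" and a: "\<bar>a\<bar> \<le> v * C" and d: "d \<ge> 0"
  shows "\<bar>z / V - a / v\<bar> \<le> d / v + 2 * C * r / V"
proof -
  have "z / V - a / v = ((z - I * a) * v - a * r) / (V * v)"
    using Vpos v by (simp add: field_simps V)
  also have "\<dots> = (z - I * a) / V - a * r / (V * v)"
    using Vpos v by (simp add: diff_divide_distrib)
  finally have split: "\<bar>z / V - a / v\<bar> \<le> \<bar>(z - I * a) / V\<bar> + \<bar>a * r / (V * v)\<bar>"
    by (simp only: abs_triangle_ineq4)
  have main: "\<bar>(z - I * a) / V\<bar> \<le> I * d / V + C * r / V"
    using z Vpos by (simp add: abs_divide divide_right_mono add_divide_distrib[symmetric] mult.commute)
  have "\<bar>a * r / (V * v)\<bar> = \<bar>a\<bar> * r / (V * v)" using r Vpos v by (simp add: abs_mult)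
  also have "\<dots> \<le> v * C * r / (V * v)"
    using a r Vpos v by (intro divide_right_mono mult_right_mono) auto
  finally have rest: "\<bar>a * r / (V * v)\<bar> \<le> C * r / V" using v by simp
  have "I * d * v \<le> d * V" using V mult_nonneg_nonneg[OF d r] by (simp add: algebra_simps)
  then have "I * d / V \<le> d / v" using Vpos v by (simp add: divide_simps mult.commute)
  with split main rest show ?thesis by simp
qed

lemma convergent_if_eventually_near:
  fixes X :: "nat \<Rightarrow> real"
  assumes "\<And>j. \<exists>L. eventually (\<lambda>n. \<bar>X n - L\<bar> \<le> 1 / Suc j) sequentially"
  shows "convergent X"
proof -
  have "Cauchy X"
  proof (rule CauchyI)
    fix e :: real assume "e > 0"
    then obtain j :: nat where j: "1 / Suc j < e / 2"
      using reals_Archimedean[of "e / 2"] by (auto simp: inverse_eq_divide)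
    obtain L N where N: "\<And>n. n \<ge> N \<Longrightarrow> \<bar>X n - L\<bar> \<le> 1 / Suc j"
      using assms[of j] by (auto simp: eventually_sequentially)
    have "norm (X m - X n) < e" if "m \<ge> N" "n \<ge> N" for m n
      using N[OF that(1)] N[OF that(2)] j unfolding real_norm_def abs_le_iff abs_less_iff by linarith
    then have "\<forall>m\<ge>N. \<forall>n\<ge>N. norm (X m - X n) < e" by blast
    then show "\<exists>M. \<forall>m\<ge>M. \<forall>n\<ge>M. norm (X m - X n) < e" by blast
  qed
  then show ?thesis by (simp add: Cauchy_convergent_iff)
qed

lemma abs_sum_diff_le:
  fixes f g :: "'a \<Rightarrow> real"
  assumes "\<And>i. i \<in> S \<Longrightarrow> \<bar>f i - g i\<bar> \<le> c" "finite S"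
  shows "\<bar>sum f S - sum g S\<bar> \<le> real (card S) * c"
proof -
  have "\<bar>sum f S - sum g S\<bar> \<le> (\<Sum>i\<in>S. \<bar>f i - g i\<bar>)"
    by (simp only: sum_subtractf[symmetric] sum_abs)
  also have "\<dots> \<le> (\<Sum>i\<in>S. c)" by (intro sum_mono assms(1))
  finally show ?thesis by simp
qed

context quenched_model
begin

text \<open>The restriction to the tile makes the tile variables functions of disjoint sets of
  coordinates, hence independent; it costs at most the boundary cost of the tile.\<close>

definition tile_lnZ :: "nat \<Rightarrow> ('d site \<Rightarrow> 'e) \<Rightarrow> 'd site \<Rightarrow> ('d site \<Rightarrow> 'f) \<Rightarrow> real" where
  "tile_lnZ k \<tau> c \<eta> = ln (Z \<tau> (cube k c) (restrict \<eta> (cube k c)))"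

definition mean_lnZ :: "nat \<Rightarrow> ('d site \<Rightarrow> 'e) \<Rightarrow> real" where
  "mean_lnZ k \<tau> = (\<integral>\<eta>. ln (Z \<tau> (box k) \<eta>) \<partial>P)"

lemma abs_tile_lnZ_le: "\<bar>tile_lnZ k \<tau> c \<eta>\<bar> \<le> real (card (box k :: 'd site set)) * pressure_bound"
  unfolding tile_lnZ_def using abs_ln_partition_fn_le[of "cube k c"] by (simp add: card_cube)

lemma abs_tile_lnZ_diff_le: "\<bar>tile_lnZ k \<tau> c \<eta> - ln (Z \<tau> (cube k c) \<eta>)\<bar> \<le> boundary_cost (box k)"
  unfolding tile_lnZ_def boundary_cost_cube[symmetric, of k c] by (rule abs_ln_partition_fn_diff_le) simp_all

lemma local_tile_lnZ: "local_on (cube k c) (tile_lnZ k \<tau> c)"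
  by (rule local_onI) (simp add: tile_lnZ_def restrict_def cong: if_cong)

lemma integrable_tile_lnZ: "integrable P (tile_lnZ k \<tau> c)"
  by (rule integrable_local[OF finite_cube local_tile_lnZ])

lemma abs_mean_lnZ_le: "\<bar>mean_lnZ k \<tau>\<bar> \<le> real (card (box k :: 'd site set)) * pressure_bound"
  using Pr.abs_integral_diff_le[OF integrable_ln_partition_fn integrable_zero, of "box k" \<tau>]
  by (simp add: mean_lnZ_def abs_ln_partition_fn_le)

lemma abs_integral_tile_lnZ_approx: "\<bar>(\<integral>\<eta>. tile_lnZ k \<tau> c \<eta> \<partial>P) - mean_lnZ k \<tau>\<bar> \<le> 2 * boundary_cost (box k)"
proof -
  have "(\<integral>\<eta>. ln (Z \<tau> (cube k c) \<eta>) \<partial>P) = (\<integral>\<eta>. ln (Z (\<lambda>y. \<tau> (c + y)) (box k) \<eta>) \<partial>P)"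
    unfolding partition_fn_cube
    by (rule integral_shift[where f="\<lambda>\<eta>. ln (Z (\<lambda>y. \<tau> (c + y)) (box k) \<eta>)"])
       (rule borel_measurable_local[OF finite_neighbourhood local_ln_partition_fn], simp_all)
  moreover have "\<bar>(\<integral>\<eta>. tile_lnZ k \<tau> c \<eta> \<partial>P) - (\<integral>\<eta>. ln (Z \<tau> (cube k c) \<eta>) \<partial>P)\<bar> \<le> boundary_cost (box k)"
    by (intro Pr.abs_integral_diff_le integrable_tile_lnZ integrable_ln_partition_fn AE_I2 abs_tile_lnZ_diff_le) simp
  moreover have "\<bar>(\<integral>\<eta>. ln (Z (\<lambda>y. \<tau> (c + y)) (box k) \<eta>) \<partial>P) - mean_lnZ k \<tau>\<bar> \<le> boundary_cost (box k)"
    unfolding mean_lnZ_def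
    by (intro Pr.abs_integral_diff_le integrable_ln_partition_fn AE_I2 abs_ln_partition_fn_diff_le) simp_all
  ultimately show ?thesis by linarith
qed

lemma indep_tile_lnZ: "Pr.indep_vars (\<lambda>_. borel) (tile_lnZ k \<tau>) (tile_centres k n)"
proof -
  have "Pr.indep_vars (\<lambda>_. measure_pmf p) (\<lambda>x \<eta>. \<eta> x) UNIV"
  proof (subst Pr.indep_vars_iff_distr_eq_PiM)
    show "Pr.random_variable (measure_pmf p) (\<lambda>\<eta>. \<eta> x)" for x by (rule measurable_component)
    have "distr P (Pi\<^sub>M UNIV (\<lambda>i. measure_pmf p)) (\<lambda>x. \<lambda>i\<in>UNIV. x i) = P"
      by (simp add: P_def restrict_UNIV distr_id2[symmetric])
    also have "\<dots> = Pi\<^sub>M UNIV (\<lambda>i. distr P (measure_pmf p) (\<lambda>\<eta>. \<eta> i))"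
      unfolding P_def by (rule PiM_cong[OF refl]) (simp add: PP.PiM_component)
    finally show "distr P (Pi\<^sub>M UNIV (\<lambda>i. measure_pmf p)) (\<lambda>x. \<lambda>i\<in>UNIV. x i)
        = Pi\<^sub>M UNIV (\<lambda>i. distr P (measure_pmf p) (\<lambda>\<eta>. \<eta> i))" .
  qed (simp_all add: measurable_component)
  then have "Pr.indep_vars (\<lambda>c. PiM (cube k c) (\<lambda>_. measure_pmf p)) (\<lambda>c \<eta>. restrict \<eta> (cube k c)) (tile_centres k n)"
    by (rule Pr.indep_vars_restrict) (auto simp: disjoint_family_on_def tiles_disjoint)
  then show ?thesis unfolding tile_lnZ_def[abs_def]
    by (rule Pr.indep_vars_compose2) (rule measurable_finite_PiM, simp)
qed

definition deviation_event :: "nat \<Rightarrow> ('d site \<Rightarrow> 'e) \<Rightarrow> real \<Rightarrow> nat \<Rightarrow> ('d site \<Rightarrow> 'f) set" where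
  "deviation_event k \<tau> \<epsilon> n = {\<eta> \<in> space P. \<bar>(\<Sum>c\<in>tile_centres k n. tile_lnZ k \<tau> c \<eta>) - (\<Sum>c\<in>tile_centres k n. \<integral>\<eta>. tile_lnZ k \<tau> c \<eta> \<partial>P)\<bar>
      \<ge> \<epsilon> * real (card (tile_centres k n :: 'd site set))}"

lemma deviation_event_sets: "deviation_event k \<tau> \<epsilon> n \<in> sets P"
proof -
  have "(\<lambda>\<eta>. \<bar>(\<Sum>c\<in>tile_centres k n. tile_lnZ k \<tau> c \<eta>) - (\<Sum>c\<in>tile_centres k n. \<integral>\<eta>. tile_lnZ k \<tau> c \<eta> \<partial>P)\<bar>)
      \<in> borel_measurable P"
    by (intro borel_measurable_abs borel_measurable_diff borel_measurable_sum borel_measurable_const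
        borel_measurable_local[OF finite_cube local_tile_lnZ])
  then show ?thesis unfolding deviation_event_def by measurable
qed

lemma measure_deviation_event_le:
  assumes "\<epsilon> > 0"
  obtains \<gamma> where "\<gamma> > 0"
    "\<And>n. measure P (deviation_event k \<tau> \<epsilon> n) \<le> 2 * exp (- \<gamma> * real (card (tile_centres k n :: 'd site set)))"
proof
  define b where "b = real (card (box k :: 'd site set)) * pressure_bound + 1"
  have b: "b > 0" unfolding b_def using pressure_bound_nonneg by (simp add: add_nonneg_pos)
  show "\<epsilon>\<^sup>2 / (2 * b\<^sup>2) > 0" using assms b by simp
  fix n
  let ?I = "tile_centres k n :: 'd site set"
  have I: "real (card ?I) > 0"
    using card_tile_centres_ge[of k n, where 'd='d] by (smt (verit) of_nat_0_le_iff)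
  interpret Hoeffding_ineq P ?I "tile_lnZ k \<tau>" "\<lambda>_. - b" "\<lambda>_. b" "\<Sum>c\<in>?I. Pr.expectation (tile_lnZ k \<tau> c)"
  proof unfold_locales
    fix c
    have "tile_lnZ k \<tau> c \<eta> \<in> {- b..b}" for \<eta>
      using abs_tile_lnZ_le[of k \<tau> c \<eta>] unfolding b_def by (simp add: abs_le_iff)
    then show "AE \<eta> in P. tile_lnZ k \<tau> c \<eta> \<in> {- b..b}" by simp
  qed (simp_all add: indep_tile_lnZ b less_imp_le)
  have "measure P (deviation_event k \<tau> \<epsilon> n)
      \<le> 2 * exp (- 2 * (\<epsilon> * real (card ?I))\<^sup>2 / (\<Sum>c\<in>?I. (b - - b)\<^sup>2))"
    unfolding deviation_event_def using Hoeffding_ineq_abs_ge[of "\<epsilon> * real (card ?I)"] assms I b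
    by (simp add: mult_pos_pos)
  also have "- 2 * (\<epsilon> * real (card ?I))\<^sup>2 / (\<Sum>c\<in>?I. (b - - b)\<^sup>2) = - (\<epsilon>\<^sup>2 / (2 * b\<^sup>2)) * real (card ?I)"
    using I b by (simp add: power2_eq_square field_simps)
  finally show "measure P (deviation_event k \<tau> \<epsilon> n) \<le> 2 * exp (- (\<epsilon>\<^sup>2 / (2 * b\<^sup>2)) * real (card ?I))" .
qed

text \<open>The number of tiles grows linearly in \<open>n\<close>, so the Hoeffding bounds are summable and
  Borel--Cantelli applies.\<close>

lemma AE_eventually_small_deviation:
  assumes "\<epsilon> > 0"
  shows "AE \<eta> in P. eventually (\<lambda>n. \<eta> \<notin> deviation_event k \<tau> \<epsilon> n) sequentially"
proof -
  obtain \<gamma> where \<gamma>: "\<gamma> > 0"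
    and bound: "\<And>n. measure P (deviation_event k \<tau> \<epsilon> n) \<le> 2 * exp (- \<gamma> * real (card (tile_centres k n :: 'd site set)))"
    using measure_deviation_event_le[OF assms] by blast
  define L where "L = 2 * real k + 1"
  have L: "L > 0" by (simp add: L_def)
  have le: "measure P (deviation_event k \<tau> \<epsilon> n) \<le> 2 * exp (\<gamma> * (6 * real k / L - 1)) * exp (- 2 * \<gamma> / L) ^ n" for n
  proof -
    have "real n - 3 * real k \<le> real (tile_grid_radius k n) * L"
      using tile_grid_radius_lower[where k=k and n=n] by (simp add: L_def)
    then have "(real n - 3 * real k) / L \<le> real (tile_grid_radius k n)"
      using L by (simp add: divide_le_eq)
    then have "2 * ((real n - 3 * real k) / L) + 1 \<le> real (card (tile_centres k n :: 'd site set))"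
      using card_tile_centres_ge[of k n, where 'd='d] by linarith
    then have "\<gamma> * (2 * ((real n - 3 * real k) / L) + 1) \<le> \<gamma> * real (card (tile_centres k n :: 'd site set))"
      using \<gamma> by (intro mult_left_mono) simp_all
    moreover have "\<gamma> * (2 * ((real n - 3 * real k) / L) + 1) = - \<gamma> * (6 * real k / L - 1) + real n * (2 * \<gamma> / L)"
      using L by (simp add: field_simps)
    ultimately show ?thesis
      using bound[of n] by (simp add: exp_minus_inverse exp_of_nat_mult[symmetric] mult_exp_exp order_trans)
  qed
  have "summable (\<lambda>n. 2 * exp (\<gamma> * (6 * real k / L - 1)) * exp (- 2 * \<gamma> / L) ^ n)"
    using \<gamma> L by (intro summable_mult summable_geometric) simp
  then have "summable (\<lambda>n. measure P (deviation_event k \<tau> \<epsilon> n))"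
    by (rule summable_comparison_test') (use le in simp)
  then have "AE \<eta> in P. eventually (\<lambda>n. \<eta> \<in> space P - deviation_event k \<tau> \<epsilon> n) sequentially"
    by (intro borel_cantelli_AE1 deviation_event_sets) (simp_all add: Pr.emeasure_eq_measure)
  then show ?thesis by simp
qed

definition pressure :: "('d site \<Rightarrow> 'e) \<Rightarrow> nat \<Rightarrow> ('d site \<Rightarrow> 'f) \<Rightarrow> real" where
  "pressure \<tau> n \<eta> = ln (Z \<tau> (box n) \<eta>) / real (card (box n :: 'd site set))"

lemma abs_pressure_le: "\<bar>pressure \<tau> n \<eta>\<bar> \<le> pressure_bound"
proof -
  have "\<bar>ln (Z \<tau> (box n) \<eta>)\<bar> \<le> real (card (box n :: 'd site set)) * pressure_bound"
    by (rule abs_ln_partition_fn_le) simp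
  moreover have "real (card (box n :: 'd site set)) > 0" using card_box_pos by simp
  ultimately show ?thesis unfolding pressure_def abs_divide
    by (simp add: pos_divide_le_eq mult.commute)
qed

lemma borel_measurable_pressure: "pressure \<tau> n \<in> borel_measurable P"
  unfolding pressure_def[abs_def]
  by (intro borel_measurable_divide borel_measurable_const
      borel_measurable_local[OF finite_neighbourhood local_ln_partition_fn]) simp_all

text \<open>Up to boundary costs, \<open>ln Z\<close> on \<open>box n\<close> is a sum of independent bounded tile variables
  with mean \<open>mean_lnZ k \<tau>\<close> plus the contribution of the rest of the tiling.\<close>

lemma AE_eventually_pressure_approx:
  assumes "\<epsilon> > 0"
  shows "AE \<eta> in P. eventually (\<lambda>n. \<bar>pressure \<tau> n \<eta> - mean_lnZ k \<tau> / real (card (box k :: 'd site set))\<bar>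
     \<le> (5 * boundary_cost (box k) + \<epsilon>) / real (card (box k :: 'd site set))
        + 2 * pressure_bound * real (card (tiling_rest k n :: 'd site set)) / real (card (box n :: 'd site set))) sequentially"
  using AE_eventually_small_deviation[OF assms, of k \<tau>]
proof (rule eventually_mono)
  fix \<eta> assume "eventually (\<lambda>n. \<eta> \<notin> deviation_event k \<tau> \<epsilon> n) sequentially"
  with eventually_ge_at_top[of k] show "eventually (\<lambda>n. \<bar>pressure \<tau> n \<eta> - mean_lnZ k \<tau> / real (card (box k :: 'd site set))\<bar>
     \<le> (5 * boundary_cost (box k) + \<epsilon>) / real (card (box k :: 'd site set))
        + 2 * pressure_bound * real (card (tiling_rest k n :: 'd site set)) / real (card (box n :: 'd site set))) sequentially"
  proof eventually_elim
    case (elim n)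
    let ?I = "tile_centres k n :: 'd site set" and ?D = "boundary_cost (box k)"
    have "\<bar>ln (Z \<tau> (box n) \<eta>) - ln (Z \<tau> (tiling_rest k n) \<eta>) - (\<Sum>c\<in>?I. ln (Z \<tau> (cube k c) \<eta>))\<bar>
        \<le> real (card ?I) * (2 * ?D)"
      by (rule abs_ln_partition_fn_tiling[OF elim(1)])
    moreover have "\<bar>(\<Sum>c\<in>?I. ln (Z \<tau> (cube k c) \<eta>)) - (\<Sum>c\<in>?I. tile_lnZ k \<tau> c \<eta>)\<bar> \<le> real (card ?I) * ?D"
      by (rule abs_sum_diff_le) (simp_all add: abs_tile_lnZ_diff_le abs_minus_commute)
    moreover have "\<bar>(\<Sum>c\<in>?I. tile_lnZ k \<tau> c \<eta>) - (\<Sum>c\<in>?I. \<integral>\<eta>. tile_lnZ k \<tau> c \<eta> \<partial>P)\<bar> \<le> \<epsilon> * real (card ?I)"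
      using elim(2) by (simp add: deviation_event_def)
    moreover have "\<bar>(\<Sum>c\<in>?I. \<integral>\<eta>. tile_lnZ k \<tau> c \<eta> \<partial>P) - (\<Sum>c\<in>?I. mean_lnZ k \<tau>)\<bar> \<le> real (card ?I) * (2 * ?D)"
      by (rule abs_sum_diff_le) (simp_all add: abs_integral_tile_lnZ_approx)
    moreover have "\<bar>ln (Z \<tau> (tiling_rest k n) \<eta>)\<bar> \<le> real (card (tiling_rest k n :: 'd site set)) * pressure_bound"
      by (rule abs_ln_partition_fn_le) simp
    ultimately have approx: "\<bar>ln (Z \<tau> (box n) \<eta>) - real (card ?I) * mean_lnZ k \<tau>\<bar>
        \<le> real (card ?I) * (5 * ?D + \<epsilon>) + real (card (tiling_rest k n :: 'd site set)) * pressure_bound"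
      by (simp add: abs_le_iff algebra_simps)
    show ?case
      unfolding pressure_def
    proof (rule abs_ratio_approx[OF _ _ _ _ approx abs_mean_lnZ_le])
      show "real (card (box n :: 'd site set))
          = real (card ?I) * real (card (box k :: 'd site set)) + real (card (tiling_rest k n :: 'd site set))"
        using card_box_eq_tiles[OF elim(1), where 'd='d] by simp
      show "0 \<le> 5 * ?D + \<epsilon>" using boundary_cost_nonneg[of "box k"] \<open>\<epsilon> > 0\<close> by simp
    qed (simp_all add: card_box_pos)
  qed
qed

lemma AE_pressure_near:
  assumes "\<delta> > 0"
  shows "AE \<eta> in P. \<exists>L. eventually (\<lambda>n. \<bar>pressure \<tau> n \<eta> - L\<bar> \<le> \<delta>) sequentially"
proof -
  define v where "v k = real (card (box k :: 'd site set))" for k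
  obtain k where k: "boundary_cost (box k) / v k < \<delta> / 15"
    using order_tendstoD(2)[OF boundary_cost_box_ratio_tendsto_0, of "\<delta> / 15"] assms
    by (auto simp: eventually_sequentially v_def)
  have v: "v k \<ge> 1" using card_box_pos[of k, where 'd='d] by (simp add: v_def)
  have "5 * (boundary_cost (box k) / v k) < \<delta> / 3" using k by linarith
  moreover have "\<delta> / 3 / v k \<le> \<delta> / 3" using v assms by (simp add: divide_le_eq)
  ultimately have bound: "(5 * boundary_cost (box k) + \<delta> / 3) / v k \<le> 2 * \<delta> / 3"
    by (simp add: add_divide_distrib)
  have "(\<lambda>n. 2 * pressure_bound * (real (card (tiling_rest k n :: 'd site set)) / v n)) \<longlonglongrightarrow> 0"
    unfolding v_def by (rule tendsto_mult_right_zero[OF card_tiling_rest_ratio_tendsto_0])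
  then have rest: "eventually (\<lambda>n. 2 * pressure_bound * real (card (tiling_rest k n :: 'd site set)) / v n < \<delta> / 3) sequentially"
    unfolding times_divide_eq_right[symmetric] by (rule order_tendstoD(2)) (use assms in simp)
  have "eventually (\<lambda>n. \<bar>pressure \<tau> n \<eta> - mean_lnZ k \<tau> / v k\<bar> \<le> \<delta>) sequentially"
    if "eventually (\<lambda>n. \<bar>pressure \<tau> n \<eta> - mean_lnZ k \<tau> / v k\<bar> \<le> (5 * boundary_cost (box k) + \<delta> / 3) / v k
      + 2 * pressure_bound * real (card (tiling_rest k n :: 'd site set)) / v n) sequentially" for \<eta>
    using that rest by eventually_elim (use bound in linarith)
  then show ?thesis
    using AE_eventually_pressure_approx[of "\<delta> / 3" \<tau> k, folded v_def] assms by (auto elim!: eventually_mono)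
qed

lemma AE_pressure_convergent: "AE \<eta> in P. convergent (\<lambda>n. pressure \<tau> n \<eta>)"
proof -
  have "AE \<eta> in P. \<forall>j. \<exists>L. eventually (\<lambda>n. \<bar>pressure \<tau> n \<eta> - L\<bar> \<le> 1 / Suc j) sequentially"
    by (simp add: AE_all_countable AE_pressure_near)
  then show ?thesis by eventually_elim (rule convergent_if_eventually_near, blast)
qed

lemma integral_pressure_tendsto:
  "(\<lambda>n. \<integral>\<eta>. pressure \<tau> n \<eta> \<partial>P) \<longlonglongrightarrow> (\<integral>\<eta>. lim (\<lambda>n. pressure \<tau> n \<eta>) \<partial>P)"
proof (rule integral_dominated_convergence[where w="\<lambda>_. pressure_bound"])
  show "AE \<eta> in P. (\<lambda>n. pressure \<tau> n \<eta>) \<longlonglongrightarrow> lim (\<lambda>n. pressure \<tau> n \<eta>)"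
    using AE_pressure_convergent by eventually_elim (simp add: convergent_LIMSEQ_iff)
qed (auto simp: borel_measurable_pressure abs_pressure_le intro: borel_measurable_lim_metric)

lemma integral_hamiltonian_density_tendsto:
  assumes "\<forall>x y. \<sigma>0 (x + y) = \<sigma>0 y"
  shows "(\<lambda>n. (\<integral>\<eta>. H (box n) \<sigma>0 \<eta> \<partial>P) / real (card (box n :: 'd site set))) \<longlonglongrightarrow> energy_density \<sigma>0"
proof -
  have "norm ((\<integral>\<eta>. H (box n) \<sigma>0 \<eta> \<partial>P) / real (card (box n :: 'd site set)) - energy_density \<sigma>0)
      \<le> boundary_cost (box n) / real (card (box n :: 'd site set))" for n
  proof -
    have V: "real (card (box n :: 'd site set)) > 0" using card_box_pos by simp
    then have "(\<integral>\<eta>. H (box n) \<sigma>0 \<eta> \<partial>P) / real (card (box n :: 'd site set)) - energy_density \<sigma>0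
        = ((\<integral>\<eta>. H (box n) \<sigma>0 \<eta> \<partial>P) - real (card (box n :: 'd site set)) * energy_density \<sigma>0)
          / real (card (box n :: 'd site set))"
      using zero_in_box[of n] by (auto simp: diff_divide_distrib)
    then show ?thesis
      using abs_integral_hamiltonian_approx[OF assms finite_box, of n] V
      by (simp add: abs_divide divide_right_mono)
  qed
  then have "(\<lambda>n. (\<integral>\<eta>. H (box n) \<sigma>0 \<eta> \<partial>P) / real (card (box n :: 'd site set)) - energy_density \<sigma>0) \<longlonglongrightarrow> 0"
    by (intro Lim_null_comparison[OF always_eventually boundary_cost_box_ratio_tendsto_0]) simp
  then show ?thesis by (rule LIM_zero_cancel)
qed

theorem e_seq_tendsto:
  assumes K: "is_joint_measure P \<Phi> \<tau> K" and inv: "\<forall>x y. \<sigma>0 (x + y) = \<sigma>0 y"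
  shows "e_seq K (distr P joint_space (\<lambda>\<eta>. (\<sigma>0, \<eta>)))
           \<longlonglongrightarrow> site_entropy + energy_density \<sigma>0 + (\<integral>\<eta>. lim (\<lambda>n. pressure \<tau> n \<eta>) \<partial>P)"
proof -
  let ?V = "\<lambda>n. real (card (box n :: 'd site set))"
  let ?a = "\<lambda>n. site_entropy + (\<integral>\<eta>. H (box n) \<sigma>0 \<eta> \<partial>P) / ?V n + (\<integral>\<eta>. ln (Z \<tau> (box n) \<eta>) \<partial>P) / ?V n"
  have "?a \<longlonglongrightarrow> site_entropy + energy_density \<sigma>0 + (\<integral>\<eta>. lim (\<lambda>n. pressure \<tau> n \<eta>) \<partial>P)"
    using integral_pressure_tendsto
    by (intro tendsto_intros integral_hamiltonian_density_tendsto[OF inv]) (simp add: pressure_def)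
  moreover have "norm (e_seq K (distr P joint_space (\<lambda>\<eta>. (\<sigma>0, \<eta>))) n - ?a n) \<le> 4 * (boundary_cost (box n) / ?V n)" for n
    using abs_e_seq_approx[OF K, where n=n and \<sigma>=\<sigma>0] by simp
  then have "(\<lambda>n. e_seq K (distr P joint_space (\<lambda>\<eta>. (\<sigma>0, \<eta>))) n - ?a n) \<longlonglongrightarrow> 0"
    by (intro Lim_null_comparison[OF always_eventually tendsto_mult_right_zero[OF boundary_cost_box_ratio_tendsto_0, of 4]])
       simp
  ultimately show ?thesis by (rule Lim_transform)
qed

end

theorem proposition6p12:
  fixes p :: "'f::finite pmf"
    and P :: "('d::finite site \<Rightarrow> 'f) measure"
    and \<Phi> :: "'d site set \<Rightarrow> ('d site \<Rightarrow> 'e::finite) \<Rightarrow> ('d site \<Rightarrow> 'f) \<Rightarrow> real"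
    and \<sigma>b \<sigma>0 :: "'d site \<Rightarrow> 'e"
    and K :: "(('d site \<Rightarrow> 'e) \<times> ('d site \<Rightarrow> 'f)) measure"
  assumes P_def: "P = PiM UNIV (\<lambda>_. measure_pmf p)"
    and pot: "is_defining_potential \<Phi>"
    and K_joint: "is_joint_measure P \<Phi> \<sigma>b K"
    and K_inv: "trans_inv_joint K"
    and \<sigma>0_inv: "\<forall>x y. \<sigma>0 (x + y) = \<sigma>0 y"
  shows "(AE \<eta> in P. convergent (\<lambda>n. ln (partition_fn \<Phi> \<sigma>b (box n) \<eta>) / real (card (box n :: 'd site set))))
     \<and> (e_seq K (distr P joint_space (\<lambda>\<eta>. (\<sigma>0, \<eta>)))
         \<longlonglongrightarrow> ks_entropy P
             + infsum (\<lambda>A. (\<integral>\<eta>. \<Phi> A \<sigma>0 \<eta> \<partial>P) / real (card A)) {A. finite A \<and> 0 \<in> A}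
             + (\<integral>\<eta>. lim (\<lambda>n. ln (partition_fn \<Phi> \<sigma>b (box n) \<eta>) / real (card (box n :: 'd site set))) \<partial>P))"
proof -
  interpret quenched_model \<Phi> p P
    by unfold_locales (fact pot, fact P_def)
  have "ln (partition_fn \<Phi> \<sigma>b (box n) \<eta>) / real (card (box n :: 'd site set)) = pressure \<sigma>b n \<eta>" for n \<eta>
    by (simp add: pressure_def)
  then show ?thesis
    using AE_pressure_convergent[of \<sigma>b] e_seq_tendsto[OF K_joint \<sigma>0_inv]
    by (simp add: ks_entropy_eq infsum_eq_energy_density)
qed

end
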